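(* Let $S(x)=\sum_{n\ge0}P_n(x)s_n$, $s_n\in\mathbb H^{r\times s}$, where the series converges in a neighborhood $N$ of the origin of $\mathbb R^4\cong\mathbb H$, and assume that the kernel $K_S(x,y)=\sum_{n\ge0}\big(P_n(x)\overline{P_n(y)}I_r-(P_n\odot S)(x)((P_n\odot S)(y))^*\big)$ is defined and positive definite on $N$. Then the series $\sum_nP_ns_n$ converges on all of $\mathcal E$ and defines the unique Schur multiplier on $\mathcal E$ extending $S$.
   Context: For $m\ge0$, $T^m_j=\frac{2(m-j+1)}{(m+1)(m+2)}$, $c_m=\sum_{j=0}^m(-1)^jT^m_j$, $P_m(x)=\frac1{c_m}\sum_{j=0}^mT^m_jx^{m-j}\overline{x}^{\,j}$. $\mathcal E=\{x\in\mathbb H:9x_0^2+x_1^2+x_2^2+x_3^2<1\}$. $\odot$ is the Cauchy–Kovalevskaya product, with $P_n\odot S=\sum_mP_{n+m}s_m$. A kernel $K$ is positive definite on a set $\Omega$ if $\sum_{i,j}u_i^*K(y_i,y_j)u_j\ge0$ for all finite families $y_i\in\Omega$, $u_i\in\mathbb H^r$. An $\mathbb H^{r\times s}$-valued hyperholomorphic $S$ on $\mathcal E$ is a Schur multiplier if $K_S$ converges and is positive definite on $\mathcal E$. *)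

theory Defs
  imports "HOL-Analysis.Analysis"
begin

text \<open>Quaternions, realised via Cayley-Dickson as pairs of complex numbers:
  the pair (a,b) stands for a + b j, i.e. x0 + x1 i + x2 j + x3 k with
  a = x0 + i x1, b = x2 + i x3.  The product-type norm is the Euclidean
  norm of R^4, so the topology is that of R^4.\<close>

type_synonym quat = "complex \<times> complex"

definition qmul :: "quat \<Rightarrow> quat \<Rightarrow> quat" where
  "qmul p q = (fst p * fst q - snd p * cnj (snd q), fst p * snd q + snd p * cnj (fst q))"

definition qcnj :: "quat \<Rightarrow> quat" where
  "qcnj p = (cnj (fst p), - snd p)"

definition qone :: quat where "qone = (1, 0)"

fun qpow :: "quat \<Rightarrow> nat \<Rightarrow> quat" where
  "qpow x 0 = qone"
| "qpow x (Suc n) = qmul x (qpow x n)"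

definition x0 :: "quat \<Rightarrow> real" where "x0 q = Re (fst q)"
definition x1 :: "quat \<Rightarrow> real" where "x1 q = Im (fst q)"
definition x2 :: "quat \<Rightarrow> real" where "x2 q = Re (snd q)"
definition x3 :: "quat \<Rightarrow> real" where "x3 q = Im (snd q)"

definition qnonneg :: "quat \<Rightarrow> bool" where
  "qnonneg q \<longleftrightarrow> x1 q = 0 \<and> x2 q = 0 \<and> x3 q = 0 \<and> x0 q \<ge> 0"

definition ellipsoid :: "quat set" where
  "ellipsoid = {x. 9 * (x0 x)^2 + (x1 x)^2 + (x2 x)^2 + (x3 x)^2 < 1}"

definition T :: "nat \<Rightarrow> nat \<Rightarrow> real" where
  "T m j = 2 * real (m - j + 1) / (real (m + 1) * real (m + 2))"

definition c :: "nat \<Rightarrow> real" where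
  "c m = (\<Sum>j\<le>m. (-1)^j * T m j)"

definition P :: "nat \<Rightarrow> quat \<Rightarrow> quat" where
  "P m x = (1 / c m) *\<^sub>R (\<Sum>j\<le>m. T m j *\<^sub>R qmul (qpow x (m - j)) (qpow (qcnj x) j))"

text \<open>Quaternionic matrices: r x s matrices are elements of quat^'s^'r.\<close>

definition qsmat :: "quat \<Rightarrow> quat^'s^'r \<Rightarrow> quat^'s^'r" where
  "qsmat q A = (\<chi> i j. qmul q (A $ i $ j))"

definition qmatmul :: "quat^'s^'r \<Rightarrow> quat^'t^'s \<Rightarrow> quat^'t^'r" where
  "qmatmul A B = (\<chi> i k. \<Sum>j\<in>UNIV. qmul (A $ i $ j) (B $ j $ k))"

definition qctrans :: "quat^'s^'r \<Rightarrow> quat^'r^'s" where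
  "qctrans A = (\<chi> i j. qcnj (A $ j $ i))"

definition qmat_id :: "quat^'r^'r" where
  "qmat_id = (\<chi> i j. if i = j then qone else 0)"

definition qhform :: "quat^'r \<Rightarrow> quat^'r^'r \<Rightarrow> quat^'r \<Rightarrow> quat" where
  "qhform u A v = (\<Sum>a\<in>UNIV. \<Sum>b\<in>UNIV. qmul (qmul (qcnj (u $ a)) (A $ a $ b)) (v $ b))"

definition series_fun :: "(nat \<Rightarrow> quat^'s^'r) \<Rightarrow> quat \<Rightarrow> quat^'s^'r" where
  "series_fun s x = (\<Sum>n. qsmat (P n x) (s n))"

definition ck_term :: "(nat \<Rightarrow> quat^'s^'r) \<Rightarrow> nat \<Rightarrow> quat \<Rightarrow> nat \<Rightarrow> quat^'s^'r" where
  "ck_term s n x m = qsmat (P (n + m) x) (s m)"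

definition ck :: "(nat \<Rightarrow> quat^'s^'r) \<Rightarrow> nat \<Rightarrow> quat \<Rightarrow> quat^'s^'r" where
  "ck s n x = (\<Sum>m. ck_term s n x m)"

definition K_term :: "(nat \<Rightarrow> quat^'s^'r) \<Rightarrow> nat \<Rightarrow> quat \<Rightarrow> quat \<Rightarrow> quat^'r^'r" where
  "K_term s n x y = qsmat (qmul (P n x) (qcnj (P n y))) qmat_id
                    - qmatmul (ck s n x) (qctrans (ck s n y))"

definition KS :: "(nat \<Rightarrow> quat^'s^'r) \<Rightarrow> quat \<Rightarrow> quat \<Rightarrow> quat^'r^'r" where
  "KS s x y = (\<Sum>n. K_term s n x y)"

definition kernel_converges :: "(nat \<Rightarrow> quat^'s^'r) \<Rightarrow> quat set \<Rightarrow> bool" where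
  "kernel_converges s \<Omega> \<longleftrightarrow>
     (\<forall>x\<in>\<Omega>. \<forall>n. summable (ck_term s n x)) \<and>
     (\<forall>x\<in>\<Omega>. \<forall>y\<in>\<Omega>. summable (\<lambda>n. K_term s n x y))"

definition pos_def_kernel :: "(quat \<Rightarrow> quat \<Rightarrow> quat^'r^'r) \<Rightarrow> quat set \<Rightarrow> bool" where
  "pos_def_kernel K \<Omega> \<longleftrightarrow>
     (\<forall>(k::nat) (y::nat \<Rightarrow> quat) (u::nat \<Rightarrow> quat^'r). (\<forall>i<k. y i \<in> \<Omega>) \<longrightarrow>
        qnonneg (\<Sum>i<k. \<Sum>j<k. qhform (u i) (K (y i) (y j)) (u j)))"

definition schur_multiplier :: "(nat \<Rightarrow> quat^'s^'r) \<Rightarrow> quat set \<Rightarrow> bool" where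
  "schur_multiplier s \<Omega> \<longleftrightarrow>
     (\<forall>x\<in>\<Omega>. summable (\<lambda>n. qsmat (P n x) (s n))) \<and>
     kernel_converges s \<Omega> \<and> pos_def_kernel (KS s) \<Omega>"

end

theory Submission
  imports Defs "HOL-Computational_Algebra.Polynomial" "HOL-Complex_Analysis.Cauchy_Integral_Formula"
begin

text \<open>Write \<open>w\<^sub>n = \<Sum>\<^sub>j conj(P\<^sub>n(y\<^sub>j)) u\<^sub>j\<close> and \<open>(T\<^sup>* w)\<^sub>n = \<Sum>\<^sub>m s\<^sub>m\<^sup>* w\<^sub>n\<^sub>+\<^sub>m\<close>. Expanding the
  kernel gives \<open>\<Sum>\<^sub>i\<^sub>j u\<^sub>i\<^sup>* K\<^sub>S(y\<^sub>i,y\<^sub>j) u\<^sub>j = \<Sum>\<^sub>n |w\<^sub>n|\<^sup>2 - |(T\<^sup>* w)\<^sub>n|\<^sup>2\<close>, so positivity of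
  \<open>K\<^sub>S\<close> says that \<open>T\<^sup>*\<close> is contractive on all such \<open>w\<close>. On the real axis \<open>P\<^sub>n(t) = t\<^sup>n / c\<^sub>n\<close>;
  choosing real points \<open>y\<^sub>j = \<epsilon> j/(L+1)\<close> and inverting a Vandermonde system, any finite
  vector \<open>(v\<^sub>0,\<dots>,v\<^sub>L)\<close> is the head of such a \<open>w\<close> with a tail of size \<open>O(\<epsilon>)\<close>. Letting
  \<open>\<epsilon> \<rightarrow> 0\<close> shows that all finite sections of \<open>T\<^sup>*\<close> are contractions. This bounds the
  coefficients \<open>s\<^sub>m\<close>, hence all series converge on the open unit ball, which contains the
  ellipsoid, and there the same identity turns contractivity back into positivity of \<open>K\<^sub>S\<close>.
  Uniqueness holds because on the real axis the series is a power series with coefficients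
  \<open>s\<^sub>n / c\<^sub>n\<close>.\<close>

section \<open>Quaternion arithmetic\<close>

lemma qmul_assoc: "qmul (qmul p q) r = qmul p (qmul q r)"
  by (simp add: qmul_def algebra_simps)

lemma qcnj_qmul: "qcnj (qmul p q) = qmul (qcnj q) (qcnj p)"
  by (simp add: qmul_def qcnj_def algebra_simps)

lemma qcnj_qcnj [simp]: "qcnj (qcnj p) = p"
  by (simp add: qcnj_def)

lemma qcnj_add [simp]: "qcnj (p + q) = qcnj p + qcnj q"
  by (simp add: qcnj_def)

lemma qcnj_zero [simp]: "qcnj 0 = 0"
  by (simp add: qcnj_def zero_prod_def)

lemma qcnj_sum: "qcnj (sum f A) = (\<Sum>i\<in>A. qcnj (f i))"
  by (induct A rule: infinite_finite_induct) auto

lemma qcnj_scaleR: "qcnj (a *\<^sub>R p) = a *\<^sub>R qcnj p"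
  by (simp add: qcnj_def scaleR_conv_of_real)

lemma qmul_add_left: "qmul (p + q) r = qmul p r + qmul q r"
  and qmul_add_right: "qmul r (p + q) = qmul r p + qmul r q"
  and qmul_diff_left: "qmul (p - q) r = qmul p r - qmul q r"
  and qmul_diff_right: "qmul r (p - q) = qmul r p - qmul r q"
  and qmul_scaleR_left: "qmul (a *\<^sub>R p) r = a *\<^sub>R qmul p r"
  and qmul_scaleR_right: "qmul r (a *\<^sub>R p) = a *\<^sub>R qmul r p"
  by (simp_all add: qmul_def algebra_simps scaleR_conv_of_real)

lemma qmul_zero_left [simp]: "qmul 0 r = 0"
  and qmul_zero_right [simp]: "qmul r 0 = 0"
  and qmul_one_right [simp]: "qmul r qone = r"
  by (simp_all add: qmul_def qone_def zero_prod_def)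

lemma qmul_sum_left: "qmul (sum f A) r = (\<Sum>i\<in>A. qmul (f i) r)"
  by (induct A rule: infinite_finite_induct) (auto simp: qmul_add_left)

lemma qmul_sum_right: "qmul r (sum f A) = (\<Sum>i\<in>A. qmul r (f i))"
  by (induct A rule: infinite_finite_induct) (auto simp: qmul_add_right)

lemma norm_qmul: "norm (qmul p q) = norm p * norm q"
proof -
  obtain a b where p: "p = (a, b)" by (cases p)
  obtain c d where q: "q = (c, d)" by (cases q)
  have "(norm (qmul p q))^2 = (norm p * norm q)^2"
    unfolding p q qmul_def norm_prod_def
    by (simp add: power_mult_distrib cmod_def) (simp add: power2_eq_square algebra_simps)
  then show ?thesis by (simp add: power2_eq_iff_nonneg)
qed

lemma norm_qcnj [simp]: "norm (qcnj p) = norm p"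
  by (simp add: qcnj_def norm_prod_def)

lemma norm_qone [simp]: "norm qone = 1"
  by (simp add: qone_def norm_prod_def)

lemma norm_qpow: "norm (qpow x n) = norm x ^ n"
  by (induct n) (simp_all add: norm_qmul)

definition qreal :: "real \<Rightarrow> quat" where
  "qreal t = (complex_of_real t, 0)"

lemma qreal_eq_scaleR_qone: "qreal t = t *\<^sub>R qone"
  by (simp add: qreal_def qone_def scaleR_prod_def scaleR_conv_of_real)

lemma qmul_qreal_left: "qmul (qreal t) p = t *\<^sub>R p"
  by (cases p) (simp add: qmul_def qreal_def scaleR_conv_of_real scaleR_prod_def)

lemma qcnj_qreal [simp]: "qcnj (qreal t) = qreal t"
  by (simp add: qcnj_def qreal_def)

lemma qreal_scaleR: "a *\<^sub>R qreal t = qreal (a * t)"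
  by (simp add: qreal_def scaleR_conv_of_real)

lemma qreal_sum: "(\<Sum>i\<in>A. qreal (f i)) = qreal (sum f A)"
  by (induct A rule: infinite_finite_induct) (auto simp: qreal_def zero_prod_def)

lemma qpow_qreal: "qpow (qreal t) n = qreal (t ^ n)"
  by (induct n) (auto simp: qone_def qreal_def qmul_def)

lemma norm_qreal [simp]: "norm (qreal t) = \<bar>t\<bar>"
  by (simp add: qreal_def norm_prod_def)

lemma qnonneg_qreal_iff: "qnonneg (qreal t) \<longleftrightarrow> t \<ge> 0"
  by (simp add: qnonneg_def qreal_def x0_def x1_def x2_def x3_def)

lemma qmul_qcnj_self: "qmul (qcnj p) p = qreal ((norm p)^2)"
proof -
  obtain a b where p: "p = (a, b)" by (cases p)
  have "cnj a * a + b * cnj b = complex_of_real ((cmod a)^2 + (cmod b)^2)"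
    by (simp only: of_real_add complex_norm_square mult.commute)
  then show ?thesis by (simp add: p qmul_def qcnj_def qreal_def norm_prod_def algebra_simps)
qed

lemma summable_qreal_imp:
  assumes "summable (\<lambda>n. qreal (f n))"
  shows "summable f" and "(\<Sum>n. qreal (f n)) = qreal (suminf f)"
proof -
  have "bounded_linear (\<lambda>q::quat. Re (fst q))"
    using bounded_linear_compose[OF bounded_linear_Re bounded_linear_fst] by (simp add: o_def)
  from bounded_linear.summable[OF this assms] show sf: "summable f"
    by (simp add: qreal_def)
  show "(\<Sum>n. qreal (f n)) = qreal (suminf f)"
    unfolding qreal_eq_scaleR_qone by (rule suminf_scaleR_left[OF sf, symmetric])
qed

lemma norm_sq_eq_coords: "(norm x)^2 = (x0 x)^2 + (x1 x)^2 + (x2 x)^2 + (x3 x)^2"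
  by (simp add: norm_prod_def x0_def x1_def x2_def x3_def cmod_def)

lemma ellipsoid_subset_ball: "ellipsoid \<subseteq> ball 0 1"
proof
  fix x :: quat assume "x \<in> ellipsoid"
  then have "(norm x)^2 < 1"
    unfolding ellipsoid_def norm_sq_eq_coords by (smt (verit) mem_Collect_eq zero_le_power2)
  then show "x \<in> ball 0 1"
    by (metis abs_norm_cancel abs_square_less_1 dist_0_norm mem_ball)
qed

lemma ball_subset_ellipsoid: "ball 0 (1/3) \<subseteq> ellipsoid"
proof
  fix x :: quat assume "x \<in> ball 0 (1/3)"
  then have "9 * (norm x)^2 < 1"
    using abs_square_less_1[of "3 * norm x"] by (simp add: power_mult_distrib)
  then show "x \<in> ellipsoid"
    unfolding ellipsoid_def norm_sq_eq_coords by (smt (verit) mem_Collect_eq zero_le_power2)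
qed

section \<open>The polynomials \<open>P\<^sub>n\<close>\<close>

lemma sum_T_numerators: "2 * (\<Sum>j\<le>m. m - j + 1) = (m + 1) * ((m::nat) + 2)"
proof (induct m)
  case (Suc m)
  have "(\<Sum>j\<le>Suc m. Suc m - j + 1) = (\<Sum>j\<le>m. Suc m - j + 1) + 1"
    by simp
  also have "(\<Sum>j\<le>m. Suc m - j + 1) = (\<Sum>j\<le>m. (m - j + 1) + 1)"
    by (intro sum.cong) (auto simp: Suc_diff_le)
  also have "\<dots> = (\<Sum>j\<le>m. m - j + 1) + (m + 1)"
    by (simp only: sum.distrib) simp
  finally show ?case using Suc by simp
qed simp

lemma T_eq: "T m j = (2 / (real (m + 1) * real (m + 2))) * real (m - j + 1)"
  unfolding T_def by (simp only: divide_inverse mult_ac)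

lemma sum_T: "(\<Sum>j\<le>m. T m j) = 1"
proof -
  have "(\<Sum>j\<le>m. T m j) = (2 / (real (m + 1) * real (m + 2))) * real (\<Sum>j\<le>m. m - j + 1)"
    by (simp only: T_eq sum_distrib_left of_nat_sum)
  also have "real (\<Sum>j\<le>m. m - j + 1) = real (m + 1) * real (m + 2) / 2"
  proof -
    have "real (2 * (\<Sum>j\<le>m. m - j + 1)) = real ((m + 1) * (m + 2))"
      by (simp only: sum_T_numerators)
    then show ?thesis by (simp only: of_nat_mult)
  qed
  finally show ?thesis by simp
qed

lemma T_nonneg: "T m j \<ge> 0"
  by (simp add: T_def)

lemma sum_alternating_T_numerators:
  "(\<Sum>j\<le>m. (-1)^j * real (m - j + 1)) = real (m div 2 + 1)"
proof (induct m)
  case (Suc m)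
  have "(\<Sum>j\<le>Suc m. (-1)^j * real (Suc m - j + 1))
        = real (Suc m + 1) - (\<Sum>j\<le>m. (-1)^j * real (m - j + 1))"
    by (subst sum.atMost_Suc_shift)
       (simp only: sum_negf[symmetric] diff_Suc_Suc power_Suc mult_minus1 minus_mult_left
         power_0 mult_1 diff_zero diff_conv_add_uminus)
  also have "\<dots> = real (Suc m div 2 + 1)"
  proof -
    have "Suc m + 1 = (m div 2 + 1) + (Suc m div 2 + 1)" by presburger
    then show ?thesis
      using Suc by (simp only: of_nat_add[symmetric])
  qed
  finally show ?case .
qed simp

lemma c_eq: "c m = 2 * real (m div 2 + 1) / (real (m + 1) * real (m + 2))"
proof -
  have "c m = (\<Sum>j\<le>m. (2 / (real (m + 1) * real (m + 2))) * ((-1)^j * real (m - j + 1)))"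
    unfolding c_def by (intro sum.cong refl) (simp only: T_eq mult_ac)
  also have "\<dots> = (2 / (real (m + 1) * real (m + 2))) * real (m div 2 + 1)"
    by (simp only: sum_distrib_left[symmetric] sum_alternating_T_numerators)
  finally show ?thesis by simp
qed

definition inv_c :: "nat \<Rightarrow> real" where
  "inv_c m = 1 / c m"

lemma inv_c_ge_1: "inv_c m \<ge> 1"
proof -
  have "2 * (m div 2 + 1) \<le> (m + 1) * (m + 2)"
    by (rule order_trans[of _ "m + 2"]) (presburger, simp)
  then have "2 * real (m div 2 + 1) \<le> real (m + 1) * real (m + 2)"
    by (metis of_nat_le_iff of_nat_mult of_nat_numeral)
  then show ?thesis by (simp add: inv_c_def c_eq)
qed

lemma inv_c_pos: "inv_c m > 0"
  using inv_c_ge_1[of m] by simp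

lemma inv_c_le: "inv_c m \<le> real m + 2"
proof -
  have "m + 1 \<le> 2 * (m div 2 + 1)" by presburger
  then have le: "real (m + 1) \<le> 2 * real (m div 2 + 1)"
    by (metis of_nat_le_iff of_nat_mult of_nat_numeral)
  have "inv_c m = real (m + 1) * real (m + 2) / (2 * real (m div 2 + 1))"
    by (simp add: inv_c_def c_eq)
  also have "\<dots> \<le> real (m + 1) * real (m + 2) / real (m + 1)"
    by (rule divide_left_mono[OF le]) auto
  finally show ?thesis by simp
qed

lemma inv_c_add_le: "inv_c (n + k) \<le> (real k + 2) * (real n + 1)"
proof -
  have "inv_c (n + k) \<le> real n + real k + 2"
    using inv_c_le[of "n + k"] by simp
  also have "\<dots> \<le> (real k + 2) * (real n + 1)"
    by (simp add: algebra_simps)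
  finally show ?thesis .
qed

lemma P_qreal: "P n (qreal t) = qreal (inv_c n * t ^ n)"
proof -
  have "P n (qreal t) = (1 / c n) *\<^sub>R (\<Sum>j\<le>n. qreal (T n j * t ^ n))"
    unfolding P_def
    by (intro arg_cong[where f="\<lambda>z. (1 / c n) *\<^sub>R z"] sum.cong refl)
       (simp add: qpow_qreal qmul_qreal_left qreal_scaleR power_add[symmetric])
  also have "\<dots> = qreal (inv_c n * t ^ n)"
    by (simp add: qreal_sum qreal_scaleR sum_distrib_right[symmetric] sum_T inv_c_def)
  finally show ?thesis .
qed

lemma norm_P_le: "norm (P n x) \<le> inv_c n * norm x ^ n"
proof -
  have c: "c n > 0"
    using inv_c_pos[of n] by (simp add: inv_c_def)
  have "norm (\<Sum>j\<le>n. T n j *\<^sub>R qmul (qpow x (n - j)) (qpow (qcnj x) j))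
        \<le> (\<Sum>j\<le>n. norm (T n j *\<^sub>R qmul (qpow x (n - j)) (qpow (qcnj x) j)))"
    by (rule norm_sum)
  also have "\<dots> = (\<Sum>j\<le>n. T n j) * norm x ^ n"
    by (simp add: norm_qmul norm_qpow T_nonneg power_add[symmetric] sum_distrib_right)
  also have "\<dots> = norm x ^ n"
    by (simp add: sum_T)
  finally show ?thesis
    using c by (simp add: P_def inv_c_def divide_right_mono)
qed

lemma norm_P_le_linear: "norm (P n x) \<le> 2 * (real n + 1) * norm x ^ n"
proof -
  have "inv_c n \<le> 2 * (real n + 1)"
    using inv_c_le[of n] by simp
  then show ?thesis
    using norm_P_le[of n x] by (meson mult_right_mono norm_ge_zero order_trans zero_le_power)
qed

lemma summable_poly_times_geometric:
  fixes q :: real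
  assumes "0 \<le> q" "q < 1"
  shows "summable (\<lambda>n. (real n + 1)^k * q^n)"
  using assms
proof (induct k arbitrary: q)
  case 0
  then show ?case by (simp add: summable_geometric)
next
  case (Suc k)
  define \<theta> where "\<theta> = sqrt q"
  have th: "0 \<le> \<theta>" "\<theta> < 1" "\<theta> * \<theta> = q"
    using Suc.prems by (auto simp: \<theta>_def)
  have "(\<lambda>n. of_nat n * \<theta> ^ n) \<longlonglongrightarrow> 0"
    by (rule powser_times_n_limit_0) (use th in simp)
  then have "Bseq (\<lambda>n. of_nat n * \<theta> ^ n)"
    by (intro convergent_imp_Bseq convergentI)
  then obtain K where K: "\<And>n. norm (of_nat n * \<theta> ^ n) \<le> K"
    by (auto simp: Bseq_def)
  have bound: "(real n + 1) * \<theta>^n \<le> K + 1" for n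
    using K[of n] th power_le_one[of \<theta> n] by (simp add: distrib_right)
  have "summable (\<lambda>n. (K + 1) * ((real n + 1)^k * \<theta>^n))"
    using Suc.hyps[of \<theta>] th by (intro summable_mult) auto
  then show ?case
  proof (rule summable_comparison_test')
    fix n :: nat
    have "(real n + 1)^(Suc k) * q^n = ((real n + 1) * \<theta>^n) * ((real n + 1)^k * \<theta>^n)"
      using th by (simp add: power_mult_distrib[symmetric] mult_ac)
    also have "\<dots> \<le> (K + 1) * ((real n + 1)^k * \<theta>^n)"
      by (rule mult_right_mono[OF bound]) (use th in simp)
    finally show "norm ((real n + 1)^(Suc k) * q^n) \<le> (K + 1) * ((real n + 1)^k * \<theta>^n)"
      using Suc.prems by simp
  qed
qed

section \<open>Quaternionic vectors and matrices\<close>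

definition qvscale :: "quat \<Rightarrow> quat^'r \<Rightarrow> quat^'r" where
  "qvscale q v = (\<chi> a. qmul q (v $ a))"

definition qadj :: "quat^'s^'r \<Rightarrow> quat^'r \<Rightarrow> quat^'s" where
  "qadj A u = (\<chi> c. \<Sum>b\<in>UNIV. qmul (qcnj (A $ b $ c)) (u $ b))"

definition qinner :: "quat^'r \<Rightarrow> quat^'r \<Rightarrow> quat" where
  "qinner u v = (\<Sum>a\<in>UNIV. qmul (qcnj (u $ a)) (v $ a))"

lemma norm_vec_sq: "(norm (u::'a::real_normed_vector^'n))^2 = (\<Sum>a\<in>UNIV. (norm (u $ a))^2)"
  by (simp add: norm_vec_def L2_set_def sum_nonneg)

lemma norm_vec_le_card_mult:
  fixes x :: "'a::real_normed_vector^'n"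
  assumes "\<And>i. norm (x $ i) \<le> b"
  shows "norm x \<le> real CARD('n) * b"
proof -
  have "norm x \<le> (\<Sum>i\<in>UNIV. norm (x $ i))"
    unfolding norm_vec_def by (rule L2_set_le_sum) simp
  also have "\<dots> \<le> (\<Sum>i\<in>(UNIV::'n set). b)"
    by (intro sum_mono assms)
  finally show ?thesis by simp
qed

lemma norm_nth_nth_le: "norm (A $ i $ j) \<le> norm A"
  using order_trans[OF Finite_Cartesian_Product.norm_nth_le Finite_Cartesian_Product.norm_nth_le] .

lemma qinner_self: "qinner u u = qreal ((norm u)^2)"
  by (simp add: qinner_def qmul_qcnj_self qreal_sum norm_vec_sq)

lemma qinner_sum_left: "qinner (sum f A) v = (\<Sum>i\<in>A. qinner (f i) v)"
  unfolding qinner_def by (simp add: sum_component qcnj_sum qmul_sum_left) (rule sum.swap)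

lemma qinner_sum_right: "qinner u (sum f A) = (\<Sum>i\<in>A. qinner u (f i))"
  unfolding qinner_def by (simp add: sum_component qmul_sum_right) (rule sum.swap)

lemma qinner_sum_sum: "qinner (sum f A) (sum g B) = (\<Sum>i\<in>A. \<Sum>j\<in>B. qinner (f i) (g j))"
  by (subst qinner_sum_left) (simp add: qinner_sum_right)

lemma qhform_qsmat_qmat_id:
  "qhform u (qsmat (qmul p (qcnj p')) qmat_id) v = qinner (qvscale (qcnj p) u) (qvscale (qcnj p') v)"
proof -
  have "qhform u (qsmat (qmul p (qcnj p')) qmat_id) v =
        (\<Sum>a\<in>UNIV. qmul (qmul (qcnj (u $ a)) (qmul p (qcnj p'))) (v $ a))"
    unfolding qhform_def qsmat_def qmat_id_def
    by (simp add: if_distrib[where f="qmul _"] if_distrib[where f="\<lambda>z. qmul z _"] cong: if_cong)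
  also have "\<dots> = qinner (qvscale (qcnj p) u) (qvscale (qcnj p') v)"
    unfolding qinner_def qvscale_def by (simp add: qcnj_qmul qmul_assoc)
  finally show ?thesis .
qed

lemma qhform_qmatmul_qctrans:
  "qhform u (qmatmul A (qctrans B)) v = qinner (qadj A u) (qadj B v)"
proof -
  have "qhform u (qmatmul A (qctrans B)) v =
     (\<Sum>a\<in>UNIV. \<Sum>b\<in>UNIV. \<Sum>c\<in>UNIV. qmul (qmul (qcnj (u $ a)) (A $ a $ c)) (qmul (qcnj (B $ b $ c)) (v $ b)))"
    unfolding qhform_def qmatmul_def qctrans_def
    by (simp add: qmul_sum_left qmul_sum_right qmul_assoc)
  also have "\<dots> = (\<Sum>c\<in>UNIV. \<Sum>a\<in>UNIV. \<Sum>b\<in>UNIV. qmul (qmul (qcnj (u $ a)) (A $ a $ c)) (qmul (qcnj (B $ b $ c)) (v $ b)))"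
    by (subst sum.swap) (rule sum.swap)
  also have "\<dots> = qinner (qadj A u) (qadj B v)"
    unfolding qinner_def qadj_def
    by (simp add: qcnj_sum qcnj_qmul qmul_sum_left qmul_sum_right) (rule sum.cong[OF refl sum.swap])
  finally show ?thesis .
qed

lemma qhform_diff: "qhform u (A - B) v = qhform u A v - qhform u B v"
  by (simp add: qhform_def qmul_diff_left qmul_diff_right sum_subtractf)

lemma bounded_linear_qhform: "bounded_linear (\<lambda>A. qhform u A v)"
  unfolding linear_conv_bounded_linear[symmetric]
  by (rule linearI)
     (simp_all add: qhform_def qmul_add_left qmul_add_right sum.distrib qmul_scaleR_left
       qmul_scaleR_right scaleR_sum_right)

lemma bounded_linear_qadj: "bounded_linear (\<lambda>A. qadj A u)"
  unfolding linear_conv_bounded_linear[symmetric]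
  by (rule linearI)
     (simp_all add: qadj_def qmul_add_left sum.distrib qmul_scaleR_left qcnj_scaleR
       scaleR_sum_right vec_eq_iff)

lemma qadj_zero_right [simp]: "qadj A 0 = 0"
  by (simp add: qadj_def vec_eq_iff)

lemma qadj_sum_right: "qadj A (sum f I) = (\<Sum>i\<in>I. qadj A (f i))"
  by (induct I rule: infinite_finite_induct) (auto simp: qadj_def qmul_add_right sum.distrib vec_eq_iff)

lemma qadj_qsmat: "qadj (qsmat p A) u = qadj A (qvscale (qcnj p) u)"
  by (simp add: qadj_def qsmat_def qvscale_def qcnj_qmul qmul_assoc)

lemma qvscale_qreal: "qvscale (qreal t) u = t *\<^sub>R u"
  by (simp add: qvscale_def qmul_qreal_left vec_eq_iff)

lemma qsmat_qreal: "qsmat (qreal t) A = t *\<^sub>R A"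
  by (simp add: qsmat_def qmul_qreal_left vec_eq_iff)

lemma norm_qvscale: "norm (qvscale p u) = norm p * norm u"
proof -
  have "(norm (qvscale p u))^2 = (norm p * norm u)^2"
    by (simp add: norm_vec_sq qvscale_def norm_qmul power_mult_distrib sum_distrib_left)
  then show ?thesis by (simp add: power2_eq_iff_nonneg)
qed

lemma norm_qsmat: "norm (qsmat p A) = norm p * norm A"
proof -
  have "(norm (qsmat p A))^2 = (norm p * norm A)^2"
    by (simp add: norm_vec_sq qsmat_def norm_qmul power_mult_distrib sum_distrib_left)
  then show ?thesis by (simp add: power2_eq_iff_nonneg)
qed

lemma norm_qctrans: "norm (qctrans (A::quat^'s^'r)) = norm A"
proof -
  have "(norm (qctrans A))^2 = (norm A)^2"
    unfolding qctrans_def by (simp add: norm_vec_sq) (rule sum.swap)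
  then show ?thesis by (simp add: power2_eq_iff_nonneg)
qed

lemma norm_qadj_le: "norm (qadj (A::quat^'s^'r) u) \<le> real (CARD('s) * CARD('r)) * norm A * norm u"
proof -
  have "norm (qadj A u $ c) \<le> (\<Sum>b\<in>(UNIV::'r set). norm A * norm u)" for c
    unfolding qadj_def vec_lambda_beta
    by (rule order_trans[OF norm_sum sum_mono])
       (simp add: norm_qmul mult_mono norm_nth_nth_le Finite_Cartesian_Product.norm_nth_le)
  then have "norm (qadj A u) \<le> real CARD('s) * (real CARD('r) * (norm A * norm u))"
    by (intro norm_vec_le_card_mult) simp
  then show ?thesis by (simp add: mult_ac)
qed

lemma norm_qmatmul_le:
  "norm (qmatmul (A::quat^'s^'r) (B::quat^'t^'s)) \<le> real (CARD('r) * CARD('t) * CARD('s)) * norm A * norm B"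
proof -
  have "norm (qmatmul A B $ i $ k) \<le> (\<Sum>j\<in>(UNIV::'s set). norm A * norm B)" for i k
    unfolding qmatmul_def vec_lambda_beta
    by (rule order_trans[OF norm_sum sum_mono]) (simp add: norm_qmul mult_mono norm_nth_nth_le)
  then have "norm (qmatmul A B) \<le> real CARD('r) * (real CARD('t) * (real CARD('s) * (norm A * norm B)))"
    by (intro norm_vec_le_card_mult) simp
  then show ?thesis by (simp add: mult_ac)
qed

definition qunit_vec :: "'r \<Rightarrow> quat^'r" where
  "qunit_vec b = (\<chi> b'. if b' = b then qone else 0)"

lemma norm_qunit_vec [simp]: "norm (qunit_vec b) = 1"
proof -
  have "(norm (qunit_vec b))^2 = 1"
    by (simp add: qunit_vec_def norm_vec_sq if_distrib[where f="\<lambda>z. (norm z)^2"] cong: if_cong)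
  then show ?thesis
    using norm_ge_zero[of "qunit_vec b"] by (simp add: power2_eq_1_iff)
qed

lemma norm_qadj_qunit_vec: "norm (qadj (A::quat^'s^'r) (qunit_vec b)) = norm (A $ b)"
proof -
  have "qadj A (qunit_vec b) = (\<chi> c. qcnj (A $ b $ c))"
    unfolding qadj_def qunit_vec_def
    by (simp add: vec_eq_iff if_distrib[where f="qmul _"] cong: if_cong)
  then have "(norm (qadj A (qunit_vec b)))^2 = (norm (A $ b))^2"
    by (simp add: norm_vec_sq)
  then show ?thesis by (simp add: power2_eq_iff_nonneg)
qed

section \<open>The kernel in terms of the adjoint Toeplitz operator\<close>

definition toeplitz_adj :: "(nat \<Rightarrow> quat^'s^'r) \<Rightarrow> (nat \<Rightarrow> quat^'r) \<Rightarrow> nat \<Rightarrow> quat^'s" where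
  "toeplitz_adj s w n = (\<Sum>m. qadj (s m) (w (n + m)))"

definition P_comb :: "(nat \<Rightarrow> quat) \<Rightarrow> (nat \<Rightarrow> quat^'r) \<Rightarrow> nat \<Rightarrow> nat \<Rightarrow> quat^'r" where
  "P_comb y u k n = (\<Sum>j<k. qvscale (qcnj (P n (y j))) (u j))"

lemma K_term_hform_eq:
  fixes s :: "nat \<Rightarrow> quat^'s^'r"
  shows "(\<Sum>i<k. \<Sum>j<k. qhform (u i) (K_term s n (y i) (y j)) (u j)) =
    qreal ((norm (P_comb y u k n))^2 - (norm (\<Sum>j<k. qadj (ck s n (y j)) (u j)))^2)"
proof -
  have "(\<Sum>i<k. \<Sum>j<k. qhform (u i) (K_term s n (y i) (y j)) (u j)) =
     (\<Sum>i<k. \<Sum>j<k. qinner (qvscale (qcnj (P n (y i))) (u i)) (qvscale (qcnj (P n (y j))) (u j)))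
     - (\<Sum>i<k. \<Sum>j<k. qinner (qadj (ck s n (y i)) (u i)) (qadj (ck s n (y j)) (u j)))"
    by (simp add: K_term_def qhform_diff qhform_qsmat_qmat_id qhform_qmatmul_qctrans sum_subtractf)
  also have "\<dots> = qinner (P_comb y u k n) (P_comb y u k n)
      - qinner (\<Sum>j<k. qadj (ck s n (y j)) (u j)) (\<Sum>j<k. qadj (ck s n (y j)) (u j))"
    by (simp only: P_comb_def qinner_sum_sum)
  finally show ?thesis
    by (simp add: qinner_self qreal_def)
qed

lemma sum_qadj_ck_eq_toeplitz_adj:
  fixes s :: "nat \<Rightarrow> quat^'s^'r"
  assumes "\<And>i. i < k \<Longrightarrow> summable (ck_term s n (y i))"
  shows "summable (\<lambda>m. qadj (s m) (P_comb y u k (n + m)))"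
    and "(\<Sum>j<k. qadj (ck s n (y j)) (u j)) = toeplitz_adj s (P_comb y u k) n"
proof -
  have terms: "qadj (s m) (P_comb y u k (n + m)) = (\<Sum>j<k. qadj (ck_term s n (y j) m) (u j))" for m
    by (simp add: P_comb_def qadj_sum_right ck_term_def qadj_qsmat)
  have summable: "summable (\<lambda>m. qadj (ck_term s n (y j) m) (u j))" if "j < k" for j
    using bounded_linear.summable[OF bounded_linear_qadj assms[OF that]] .
  then show "summable (\<lambda>m. qadj (s m) (P_comb y u k (n + m)))"
    unfolding terms by (intro summable_sum) auto
  have "(\<Sum>j<k. qadj (ck s n (y j)) (u j)) = (\<Sum>j<k. \<Sum>m. qadj (ck_term s n (y j) m) (u j))"
    unfolding ck_def using assms
    by (intro sum.cong refl) (simp add: bounded_linear.suminf[OF bounded_linear_qadj])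
  also have "\<dots> = (\<Sum>m. \<Sum>j<k. qadj (ck_term s n (y j) m) (u j))"
    using summable by (intro suminf_sum[symmetric]) auto
  finally show "(\<Sum>j<k. qadj (ck s n (y j)) (u j)) = toeplitz_adj s (P_comb y u k) n"
    unfolding toeplitz_adj_def terms .
qed

lemma KS_hform_eq:
  fixes s :: "nat \<Rightarrow> quat^'s^'r" and u :: "nat \<Rightarrow> quat^'r"
  assumes "\<And>i n. i < k \<Longrightarrow> summable (ck_term s n (y i))"
    and K: "\<And>i j. i < k \<Longrightarrow> j < k \<Longrightarrow> summable (\<lambda>n. K_term s n (y i) (y j))"
  defines "f \<equiv> \<lambda>n. (norm (P_comb y u k n))^2 - (norm (toeplitz_adj s (P_comb y u k) n))^2"
  shows "summable f"
    and "(\<Sum>i<k. \<Sum>j<k. qhform (u i) (KS s (y i) (y j)) (u j)) = qreal (suminf f)"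
proof -
  have K_term_eq: "(\<Sum>i<k. \<Sum>j<k. qhform (u i) (K_term s n (y i) (y j)) (u j)) = qreal (f n)" for n
    using sum_qadj_ck_eq_toeplitz_adj(2)[OF assms(1)] by (simp add: K_term_hform_eq f_def)
  have summable: "summable (\<lambda>n. qhform (u i) (K_term s n (y i) (y j)) (u j))" if "i < k" "j < k" for i j
    using bounded_linear.summable[OF bounded_linear_qhform K[OF that]] .
  have "(\<Sum>i<k. \<Sum>j<k. qhform (u i) (KS s (y i) (y j)) (u j)) =
        (\<Sum>i<k. \<Sum>j<k. \<Sum>n. qhform (u i) (K_term s n (y i) (y j)) (u j))"
    unfolding KS_def using K
    by (intro sum.cong refl) (simp add: bounded_linear.suminf[OF bounded_linear_qhform])
  also have "\<dots> = (\<Sum>i<k. \<Sum>n. \<Sum>j<k. qhform (u i) (K_term s n (y i) (y j)) (u j))"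
    using summable by (intro sum.cong refl suminf_sum[symmetric]) auto
  also have "\<dots> = (\<Sum>n. \<Sum>i<k. \<Sum>j<k. qhform (u i) (K_term s n (y i) (y j)) (u j))"
    using summable by (intro suminf_sum[symmetric] summable_sum) auto
  finally have eq: "(\<Sum>i<k. \<Sum>j<k. qhform (u i) (KS s (y i) (y j)) (u j)) = (\<Sum>n. qreal (f n))"
    by (simp only: K_term_eq)
  have "summable (\<lambda>n. \<Sum>i<k. \<Sum>j<k. qhform (u i) (K_term s n (y i) (y j)) (u j))"
    using summable by (intro summable_sum) auto
  then have "summable (\<lambda>n. qreal (f n))"
    by (simp only: K_term_eq)
  from summable_qreal_imp[OF this] eq
  show "summable f" "(\<Sum>i<k. \<Sum>j<k. qhform (u i) (KS s (y i) (y j)) (u j)) = qreal (suminf f)"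
    by auto
qed

lemma qnonneg_KS_hform_iff:
  fixes s :: "nat \<Rightarrow> quat^'s^'r"
  assumes "\<And>i n. i < k \<Longrightarrow> summable (ck_term s n (y i))"
    and "\<And>i j. i < k \<Longrightarrow> j < k \<Longrightarrow> summable (\<lambda>n. K_term s n (y i) (y j))"
    and sw: "summable (\<lambda>n. (norm (P_comb y u k n))^2)"
  shows "summable (\<lambda>n. (norm (toeplitz_adj s (P_comb y u k) n))^2)"
    and "qnonneg (\<Sum>i<k. \<Sum>j<k. qhform (u i) (KS s (y i) (y j)) (u j)) \<longleftrightarrow>
      (\<Sum>n. (norm (toeplitz_adj s (P_comb y u k) n))^2) \<le> (\<Sum>n. (norm (P_comb y u k n))^2)"
proof -
  note KS = KS_hform_eq[where u=u and y=y and k=k, OF assms(1,2)]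
  show sz: "summable (\<lambda>n. (norm (toeplitz_adj s (P_comb y u k) n))^2)"
    using summable_diff[OF sw KS(1)] by simp
  show "qnonneg (\<Sum>i<k. \<Sum>j<k. qhform (u i) (KS s (y i) (y j)) (u j)) \<longleftrightarrow>
      (\<Sum>n. (norm (toeplitz_adj s (P_comb y u k) n))^2) \<le> (\<Sum>n. (norm (P_comb y u k n))^2)"
    using KS(2) suminf_diff[OF sw sz, symmetric] by (simp add: qnonneg_qreal_iff)
qed

lemma summable_sq_norm_P_comb:
  assumes "\<And>j. j < k \<Longrightarrow> norm (y j) < 1"
  shows "summable (\<lambda>n. (norm (P_comb y u k n))^2)"
proof -
  define \<rho> where "\<rho> = Max (insert 0 ((\<lambda>j. norm (y j)) ` {..<k}))"
  have \<rho>: "0 \<le> \<rho>" "\<rho> < 1"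
    unfolding \<rho>_def using assms by (auto simp: Max_less_iff)
  have y_le: "norm (y j) \<le> \<rho>" if "j < k" for j
    unfolding \<rho>_def by (rule Max_ge) (use that in auto)
  define U where "U = (\<Sum>j<k. norm (u j))"
  have bound: "norm (P_comb y u k n) \<le> 2 * (real n + 1) * \<rho>^n * U" for n
  proof -
    have "norm (P_comb y u k n) \<le> (\<Sum>j<k. norm (qvscale (qcnj (P n (y j))) (u j)))"
      unfolding P_comb_def by (rule norm_sum)
    also have "\<dots> \<le> (\<Sum>j<k. (2 * (real n + 1) * \<rho>^n) * norm (u j))"
    proof (rule sum_mono)
      fix j assume "j \<in> {..<k}"
      then have "norm (y j) ^ n \<le> \<rho> ^ n"
        using y_le[of j] by (intro power_mono) auto
      then have "norm (P n (y j)) \<le> 2 * (real n + 1) * \<rho>^n"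
        using norm_P_le_linear[of n "y j"] by (smt (verit) mult_left_mono of_nat_0_le_iff)
      then show "norm (qvscale (qcnj (P n (y j))) (u j)) \<le> (2 * (real n + 1) * \<rho>^n) * norm (u j)"
        by (simp add: norm_qvscale mult_right_mono)
    qed
    also have "\<dots> = 2 * (real n + 1) * \<rho>^n * U"
      by (simp add: U_def sum_distrib_left)
    finally show ?thesis .
  qed
  have "summable (\<lambda>n. (4 * U^2) * ((real n + 1)^2 * (\<rho>^2)^n))"
    using \<rho> by (intro summable_mult summable_poly_times_geometric) (auto simp: power_less_one_iff)
  then show ?thesis
  proof (rule summable_comparison_test')
    fix n :: nat
    have "(norm (P_comb y u k n))^2 \<le> (2 * (real n + 1) * \<rho>^n * U)^2"
      by (intro power_mono bound) simp
    also have "\<dots> = (4 * U^2) * ((real n + 1)^2 * (\<rho>^2)^n)"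
      by (simp add: power_mult_distrib power_mult[symmetric] mult_ac)
         (simp add: power2_eq_square algebra_simps)
    finally show "norm ((norm (P_comb y u k n))^2) \<le> (4 * U^2) * ((real n + 1)^2 * (\<rho>^2)^n)"
      by simp
  qed
qed

section \<open>Contractive Toeplitz operators\<close>

definition toeplitz_contractive :: "(nat \<Rightarrow> quat^'s^'r) \<Rightarrow> bool" where
  "toeplitz_contractive s \<longleftrightarrow> (\<forall>L (v :: nat \<Rightarrow> quat^'r).
      (\<Sum>n\<le>L. (norm (\<Sum>m\<le>L - n. qadj (s m) (v (n + m))))^2) \<le> (\<Sum>n\<le>L. (norm (v n))^2))"

lemma toeplitz_contractive_sq_le:
  fixes s :: "nat \<Rightarrow> quat^'s^'r" and w :: "nat \<Rightarrow> quat^'r"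
  assumes fc: "toeplitz_contractive s" and sw: "summable (\<lambda>n. (norm (w n))^2)"
    and sz: "\<And>n. summable (\<lambda>m. qadj (s m) (w (n + m)))"
  shows "summable (\<lambda>n. (norm (toeplitz_adj s w n))^2)"
    and "(\<Sum>n. (norm (toeplitz_adj s w n))^2) \<le> (\<Sum>n. (norm (w n))^2)"
proof -
  define S where "S = (\<Sum>n. (norm (w n))^2)"
  have partial: "(\<Sum>n<N. (norm (toeplitz_adj s w n))^2) \<le> S" for N
  proof -
    define g where "g L = (\<Sum>n<N. (norm (\<Sum>m\<le>L - n. qadj (s m) (w (n + m))))^2)" for L
    have "g \<longlonglongrightarrow> (\<Sum>n<N. (norm (toeplitz_adj s w n))^2)"
      unfolding g_def
    proof (intro tendsto_sum tendsto_power tendsto_norm)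
      fix n
      have "(\<lambda>M. \<Sum>m\<le>M. qadj (s m) (w (n + m))) \<longlonglongrightarrow> toeplitz_adj s w n"
        unfolding toeplitz_adj_def by (rule summable_LIMSEQ'[OF sz])
      then show "(\<lambda>L. \<Sum>m\<le>L - n. qadj (s m) (w (n + m))) \<longlonglongrightarrow> toeplitz_adj s w n"
        by (rule filterlim_compose[OF _ filterlim_minus_const_nat_at_top])
    qed
    moreover have "g L \<le> S" if "N \<le> L" for L
    proof -
      have "g L \<le> (\<Sum>n\<le>L. (norm (\<Sum>m\<le>L - n. qadj (s m) (w (n + m))))^2)"
        unfolding g_def by (rule sum_mono2) (use that in auto)
      also have "\<dots> \<le> (\<Sum>n\<le>L. (norm (w n))^2)"
        using fc unfolding toeplitz_contractive_def by blast
      also have "\<dots> \<le> S"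
        unfolding S_def by (rule sum_le_suminf[OF sw]) auto
      finally show ?thesis .
    qed
    ultimately show ?thesis
      by (intro LIMSEQ_le_const2) auto
  qed
  have "(\<Sum>n\<le>N. (norm (toeplitz_adj s w n))^2) \<le> S" for N
    using partial[of "Suc N"] by (simp add: lessThan_Suc_atMost)
  then show sz2: "summable (\<lambda>n. (norm (toeplitz_adj s w n))^2)"
    by (intro bounded_imp_summable) auto
  show "(\<Sum>n. (norm (toeplitz_adj s w n))^2) \<le> (\<Sum>n. (norm (w n))^2)"
    using suminf_le_const[OF sz2 partial] by (simp add: S_def)
qed

lemma toeplitz_contractive_norm_le:
  fixes s :: "nat \<Rightarrow> quat^'s^'r"
  assumes "toeplitz_contractive s"
  shows "norm (s m) \<le> real CARD('r)"
proof -
  have qadj_le: "norm (qadj (s m) e) \<le> norm e" for e :: "quat^'r"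
  proof -
    define v where "v n = (if n = m then e else 0)" for n
    have "(norm (qadj (s m) e))^2 = (norm (\<Sum>j\<le>m - 0. qadj (s j) (v (0 + j))))^2"
      by (simp add: v_def if_distrib[where f="qadj _"] cong: if_cong)
    also have "\<dots> \<le> (\<Sum>n\<le>m. (norm (\<Sum>j\<le>m - n. qadj (s j) (v (n + j))))^2)"
      by (rule member_le_sum) auto
    also have "\<dots> \<le> (\<Sum>n\<le>m. (norm (v n))^2)"
      using assms unfolding toeplitz_contractive_def by blast
    also have "\<dots> = (norm e)^2"
      by (simp add: v_def if_distrib[where f="\<lambda>z. (norm z)^2"] cong: if_cong)
    finally show ?thesis
      by (rule power2_le_imp_le) simp
  qed
  have "norm (s m $ b) \<le> 1" for b
    using qadj_le[of "qunit_vec b"] by (simp add: norm_qadj_qunit_vec)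
  then have "norm (s m) \<le> real CARD('r) * 1"
    by (rule norm_vec_le_card_mult)
  then show ?thesis by simp
qed

section \<open>Bounded coefficients: Schur multipliers on the unit ball\<close>

lemma summable_P_series:
  fixes s :: "nat \<Rightarrow> quat^'s^'r"
  assumes bound: "\<And>m. norm (s m) \<le> B" and x: "norm x < 1"
  shows "summable (\<lambda>n. qsmat (P n x) (s n))"
proof -
  have "summable (\<lambda>n. (2 * B) * ((real n + 1)^1 * norm x ^ n))"
    using x by (intro summable_mult summable_poly_times_geometric) auto
  then show ?thesis
  proof (rule summable_comparison_test')
    fix n
    have "norm (qsmat (P n x) (s n)) \<le> (2 * (real n + 1) * norm x ^ n) * B"
      unfolding norm_qsmat using norm_P_le_linear[of n x] bound[of n]
      by (intro mult_mono) auto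
    then show "norm (qsmat (P n x) (s n)) \<le> (2 * B) * ((real n + 1)^1 * norm x ^ n)"
      by (simp add: algebra_simps)
  qed
qed

lemma norm_ck_term_le:
  fixes s :: "nat \<Rightarrow> quat^'s^'r"
  assumes bound: "\<And>m. norm (s m) \<le> B"
  shows "norm (ck_term s n x m) \<le> (B * (real n + 2) * norm x ^ n) * ((real m + 1) * norm x ^ m)"
proof -
  have "norm (ck_term s n x m) = norm (P (m + n) x) * norm (s m)"
    by (simp add: ck_term_def norm_qsmat add.commute)
  also have "\<dots> \<le> ((real n + 2) * (real m + 1) * norm x ^ (n + m)) * B"
    using norm_P_le[of "m + n" x] inv_c_add_le[of m n] bound[of m]
    by (smt (verit, best) add.commute mult_mono mult_right_mono norm_ge_zero zero_le_power)
  finally show ?thesis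
    by (simp add: power_add mult_ac)
qed

lemma summable_ck_term:
  fixes s :: "nat \<Rightarrow> quat^'s^'r"
  assumes "\<And>m. norm (s m) \<le> B" and "norm x < 1"
  shows "summable (ck_term s n x)"
    and "norm (ck s n x) \<le> B * (real n + 2) * norm x ^ n * (\<Sum>m. (real m + 1) * norm x ^ m)"
proof -
  have geom: "summable (\<lambda>m. (B * (real n + 2) * norm x ^ n) * ((real m + 1) * norm x ^ m))"
    using summable_poly_times_geometric[of "norm x" 1] assms(2) by (intro summable_mult) simp
  show "summable (ck_term s n x)"
    by (rule summable_comparison_test'[OF geom norm_ck_term_le[OF assms(1)]])
  have "norm (ck s n x) \<le> (\<Sum>m. (B * (real n + 2) * norm x ^ n) * ((real m + 1) * norm x ^ m))"
    unfolding ck_def by (rule norm_suminf_le[OF norm_ck_term_le[OF assms(1)] geom])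
  also have "\<dots> = B * (real n + 2) * norm x ^ n * (\<Sum>m. (real m + 1) * norm x ^ m)"
    using summable_poly_times_geometric[of "norm x" 1] assms(2) by (simp add: suminf_mult)
  finally show "norm (ck s n x) \<le> B * (real n + 2) * norm x ^ n * (\<Sum>m. (real m + 1) * norm x ^ m)" .
qed

lemma summable_K_term:
  fixes s :: "nat \<Rightarrow> quat^'s^'r"
  assumes bound: "\<And>m. norm (s m) \<le> B" and x: "norm x < 1" and y: "norm y < 1"
  shows "summable (\<lambda>n. K_term s n x y)"
proof -
  have B: "B \<ge> 0"
    using bound[of 0] norm_ge_zero order_trans by blast
  define Sx where "Sx = (\<Sum>m. (real m + 1) * norm x ^ m)"
  define Sy where "Sy = (\<Sum>m. (real m + 1) * norm y ^ m)"
  have Sx: "Sx \<ge> 0" and Sy: "Sy \<ge> 0"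
    unfolding Sx_def Sy_def using summable_poly_times_geometric[of _ 1] x y
    by (auto intro!: suminf_nonneg)
  define q where "q = norm x * norm y"
  have q: "0 \<le> q" "q < 1"
    unfolding q_def using x y mult_strict_mono[of "norm x" 1 "norm y" 1] by auto
  define cM where "cM = real (CARD('r) * CARD('r) * CARD('s))"
  define C where "C = 4 * norm (qmat_id :: quat^'r^'r) + 4 * cM * B^2 * Sx * Sy"
  have "summable (\<lambda>n. C * ((real n + 1)^2 * q^n))"
    by (intro summable_mult summable_poly_times_geometric q)
  then show ?thesis
  proof (rule summable_comparison_test')
    fix n :: nat
    have "norm (qsmat (qmul (P n x) (qcnj (P n y))) (qmat_id :: quat^'r^'r))
          = norm (P n x) * norm (P n y) * norm (qmat_id :: quat^'r^'r)"
      by (simp add: norm_qsmat norm_qmul)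
    also have "\<dots> \<le> (2 * (real n + 1) * norm x ^ n) * (2 * (real n + 1) * norm y ^ n)
                     * norm (qmat_id :: quat^'r^'r)"
      by (intro mult_right_mono mult_mono norm_P_le_linear) auto
    also have "\<dots> = 4 * norm (qmat_id :: quat^'r^'r) * ((real n + 1)^2 * q^n)"
      by (simp add: q_def power_mult_distrib power2_eq_square mult_ac) (simp add: algebra_simps)
    finally have diag: "norm (qsmat (qmul (P n x) (qcnj (P n y))) (qmat_id :: quat^'r^'r))
                        \<le> 4 * norm (qmat_id :: quat^'r^'r) * ((real n + 1)^2 * q^n)" .
    have "norm (qmatmul (ck s n x) (qctrans (ck s n y))) \<le> cM * norm (ck s n x) * norm (ck s n y)"
      using norm_qmatmul_le[of "ck s n x" "qctrans (ck s n y)"] by (simp add: norm_qctrans cM_def mult_ac)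
    also have "\<dots> \<le> cM * (B * (real n + 2) * norm x ^ n * Sx) * (B * (real n + 2) * norm y ^ n * Sy)"
      using summable_ck_term(2)[OF bound x, where n=n] summable_ck_term(2)[OF bound y, where n=n] B Sx Sy
      unfolding Sx_def Sy_def cM_def by (intro mult_mono mult_left_mono) auto
    also have "\<dots> = cM * B^2 * Sx * Sy * ((real n + 2)^2 * q^n)"
      by (simp add: q_def power_mult_distrib power2_eq_square mult_ac)
    also have "\<dots> \<le> cM * B^2 * Sx * Sy * (4 * (real n + 1)^2 * q^n)"
      using q Sx Sy B
      by (intro mult_left_mono mult_right_mono) (auto simp: cM_def power2_eq_square algebra_simps)
    finally have off_diag: "norm (qmatmul (ck s n x) (qctrans (ck s n y)))
                            \<le> 4 * cM * B^2 * Sx * Sy * ((real n + 1)^2 * q^n)"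
      by (simp add: mult_ac)
    show "norm (K_term s n x y) \<le> C * ((real n + 1)^2 * q^n)"
      unfolding K_term_def C_def using norm_triangle_ineq4 diag off_diag
      by (smt (verit, best) distrib_right)
  qed
qed

lemma kernel_converges_ball:
  assumes "\<And>m. norm (s m) \<le> B"
  shows "kernel_converges s (ball 0 1)"
  using summable_ck_term(1)[OF assms] summable_K_term[OF assms]
  by (simp add: kernel_converges_def)

lemma toeplitz_contractive_imp_pos_def_kernel:
  fixes s :: "nat \<Rightarrow> quat^'s^'r"
  assumes fc: "toeplitz_contractive s" and bound: "\<And>m. norm (s m) \<le> B"
  shows "pos_def_kernel (KS s) (ball 0 1)"
  unfolding pos_def_kernel_def
proof (intro allI impI)
  fix k and y :: "nat \<Rightarrow> quat" and u :: "nat \<Rightarrow> quat^'r"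
  assume "\<forall>i<k. y i \<in> ball 0 1"
  then have y: "\<And>i. i < k \<Longrightarrow> norm (y i) < 1"
    by simp
  note ck = summable_ck_term(1)[OF bound y]
  have "(\<Sum>n. (norm (toeplitz_adj s (P_comb y u k) n))^2) \<le> (\<Sum>n. (norm (P_comb y u k n))^2)"
    by (rule toeplitz_contractive_sq_le(2)[OF fc summable_sq_norm_P_comb[OF y]
          sum_qadj_ck_eq_toeplitz_adj(1)[OF ck]])
  then show "qnonneg (\<Sum>i<k. \<Sum>j<k. qhform (u i) (KS s (y i) (y j)) (u j))"
    using qnonneg_KS_hform_iff(2)[where u=u and y=y and k=k,
        OF ck summable_K_term[OF bound y y] summable_sq_norm_P_comb[OF y]]
    by simp
qed

lemma schur_multiplier_ball:
  assumes "toeplitz_contractive s" and "\<And>m. norm (s m) \<le> B"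
  shows "schur_multiplier s (ball 0 1)"
  using summable_P_series[OF assms(2)] kernel_converges_ball[OF assms(2)]
    toeplitz_contractive_imp_pos_def_kernel[OF assms]
  by (simp add: schur_multiplier_def)

lemma schur_multiplier_subset:
  assumes "schur_multiplier s A" and "B \<subseteq> A"
  shows "schur_multiplier s B"
  using assms unfolding schur_multiplier_def kernel_converges_def pos_def_kernel_def
  by (meson subsetD)

section \<open>Interpolation at real points near the origin\<close>

definition node :: "nat \<Rightarrow> nat \<Rightarrow> real" where
  "node L i = real i / real (L + 1)"

definition vandermonde_inverse :: "nat \<Rightarrow> (nat \<Rightarrow> nat \<Rightarrow> real) \<Rightarrow> bool" where
  "vandermonde_inverse L lam \<longleftrightarrow>
     (\<forall>n\<le>L. \<forall>p\<le>L. (\<Sum>i\<le>L. node L i ^ n * lam i p) = (if n = p then 1 else 0))"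

lemma node_nonneg: "0 \<le> node L i"
  and node_le_1: "i \<le> L \<Longrightarrow> node L i \<le> 1"
  by (simp_all add: node_def)

lemma vandermonde_inverse_exists: "\<exists>lam. vandermonde_inverse L lam"
proof -
  have inj: "node L i = node L j \<longleftrightarrow> i = j" for i j
    by (simp add: node_def divide_cancel_right)
  define l :: "nat \<Rightarrow> real poly" where
    "l i = smult (1 / (\<Prod>j\<in>{..L}-{i}. (node L i - node L j))) (\<Prod>j\<in>{..L}-{i}. [:- node L j, 1:])" for i
  have degree_l: "degree (l i) \<le> L" if "i \<le> L" for i
  proof -
    have "degree (l i) \<le> degree (\<Prod>j\<in>{..L}-{i}. [:- node L j, 1:])"
      unfolding l_def by (rule degree_smult_le)
    also have "\<dots> \<le> (\<Sum>j\<in>{..L}-{i}. degree [:- node L j, 1:])"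
      using degree_prod_sum_le[of "{..L}-{i}" "\<lambda>j. [:- node L j, 1:]"] by (simp add: o_def)
    also have "\<dots> \<le> (\<Sum>j\<in>{..L}-{i}. 1)"
      by (intro sum_mono) simp
    also have "\<dots> \<le> L"
      using that by (simp add: card_Diff_singleton)
    finally show ?thesis .
  qed
  have poly_l: "poly (l i) (node L q) = (if q = i then 1 else 0)" if "i \<le> L" "q \<le> L" for i q
  proof (cases "q = i")
    case True
    have "(\<Prod>j\<in>{..L}-{i}. (node L i - node L j)) \<noteq> 0"
      by (subst prod_zero_iff) (auto simp: inj)
    then show ?thesis using True by (simp add: l_def poly_prod)
  next
    case False
    have "(\<Prod>j\<in>{..L}-{i}. poly [:- node L j, 1:] (node L q)) = 0"
      by (rule prod_zero) (use that False in \<open>auto intro!: bexI[of _ q]\<close>)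
    then show ?thesis using False by (simp add: l_def poly_prod)
  qed
  have card_nodes: "card (node L ` {..L}) = L + 1"
    by (subst card_image) (auto simp: inj_on_def inj)
  have "(\<Sum>i\<le>L. node L i ^ n * coeff (l i) p) = (if n = p then 1 else 0)" if "n \<le> L" for n p
  proof -
    have "monom 1 n = (\<Sum>i\<le>L. smult (node L i ^ n) (l i))"
    proof (rule poly_eqI_degree[of "node L ` {..L}"])
      fix x assume "x \<in> node L ` {..L}"
      then obtain q where q: "q \<le> L" "x = node L q" by auto
      have "poly (\<Sum>i\<le>L. smult (node L i ^ n) (l i)) x = (\<Sum>i\<le>L. node L i ^ n * (if q = i then 1 else 0))"
        using q by (simp add: poly_sum poly_l)
      also have "\<dots> = node L q ^ n"
        using q by (simp add: if_distrib[where f="\<lambda>z. _ * z"] cong: if_cong)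
      finally show "poly (monom 1 n) x = poly (\<Sum>i\<le>L. smult (node L i ^ n) (l i)) x"
        using q by (simp add: poly_monom)
    next
      show "degree (monom (1::real) n) < card (node L ` {..L})"
        using that card_nodes by (simp add: degree_monom_eq)
      have "degree (\<Sum>i\<le>L. smult (node L i ^ n) (l i)) \<le> L"
        by (rule degree_sum_le) (auto intro: order_trans[OF degree_smult_le] degree_l)
      then show "degree (\<Sum>i\<le>L. smult (node L i ^ n) (l i)) < card (node L ` {..L})"
        using card_nodes by simp
    qed
    then have "coeff (monom 1 n) p = coeff (\<Sum>i\<le>L. smult (node L i ^ n) (l i)) p"
      by simp
    then show ?thesis by (simp add: coeff_sum coeff_monom)
  qed
  then have "vandermonde_inverse L (\<lambda>i p. coeff (l i) p)"
    unfolding vandermonde_inverse_def by blast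
  then show ?thesis by blast
qed

text \<open>Since \<open>P n (qreal t) = qreal (inv_c n * t ^ n)\<close>, \<open>interp_seq\<close> is \<open>P_comb\<close> at the
  real points \<open>\<epsilon> * node L i\<close>; its weights invert both the Vandermonde matrix
  \<open>node L i ^ n\<close> and the factors \<open>\<epsilon> ^ n * inv_c n\<close>, which makes the first \<open>L + 1\<close>
  terms equal to \<open>v\<close>.\<close>

definition interp_weight :: "(nat \<Rightarrow> nat \<Rightarrow> real) \<Rightarrow> nat \<Rightarrow> real \<Rightarrow> (nat \<Rightarrow> 'a::real_vector) \<Rightarrow> nat \<Rightarrow> 'a" where
  "interp_weight lam L \<epsilon> v i = (\<Sum>p\<le>L. (lam i p / (\<epsilon> ^ p * inv_c p)) *\<^sub>R v p)"

definition interp_seq :: "(nat \<Rightarrow> nat \<Rightarrow> real) \<Rightarrow> nat \<Rightarrow> real \<Rightarrow> (nat \<Rightarrow> 'a::real_vector) \<Rightarrow> nat \<Rightarrow> 'a" where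
  "interp_seq lam L \<epsilon> v n = (\<Sum>i\<le>L. (inv_c n * (\<epsilon> * node L i) ^ n) *\<^sub>R interp_weight lam L \<epsilon> v i)"

definition interp_coeff :: "(nat \<Rightarrow> nat \<Rightarrow> real) \<Rightarrow> nat \<Rightarrow> real \<Rightarrow> nat \<Rightarrow> nat \<Rightarrow> real" where
  "interp_coeff lam L \<epsilon> n p = inv_c n * \<epsilon> ^ n / (\<epsilon> ^ p * inv_c p) * (\<Sum>i\<le>L. node L i ^ n * lam i p)"

lemma interp_seq_eq_sum_interp_coeff:
  "interp_seq lam L \<epsilon> v n = (\<Sum>p\<le>L. interp_coeff lam L \<epsilon> n p *\<^sub>R v p)"
proof -
  have "interp_seq lam L \<epsilon> v n =
        (\<Sum>i\<le>L. \<Sum>p\<le>L. (inv_c n * (\<epsilon> * node L i) ^ n * (lam i p / (\<epsilon> ^ p * inv_c p))) *\<^sub>R v p)"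
    unfolding interp_seq_def interp_weight_def by (simp add: scaleR_sum_right)
  also have "\<dots> = (\<Sum>p\<le>L. \<Sum>i\<le>L. (inv_c n * (\<epsilon> * node L i) ^ n * (lam i p / (\<epsilon> ^ p * inv_c p))) *\<^sub>R v p)"
    by (rule sum.swap)
  also have "\<dots> = (\<Sum>p\<le>L. interp_coeff lam L \<epsilon> n p *\<^sub>R v p)"
    unfolding interp_coeff_def scaleR_sum_left[symmetric]
    by (intro sum.cong refl arg_cong[where f="\<lambda>z. z *\<^sub>R _"])
       (simp add: sum_distrib_left sum_divide_distrib power_mult_distrib mult_ac)
  finally show ?thesis .
qed

lemma interp_seq_eq:
  assumes "vandermonde_inverse L lam" and "0 < \<epsilon>" and "n \<le> L"
  shows "interp_seq lam L \<epsilon> v n = v n"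
proof -
  have "interp_coeff lam L \<epsilon> n p = (if p = n then 1 else 0)" if "p \<le> L" for p
    using assms that inv_c_pos[of n] by (auto simp: interp_coeff_def vandermonde_inverse_def)
  then have "interp_seq lam L \<epsilon> v n = (\<Sum>p\<le>L. if p = n then v p else 0)"
    unfolding interp_seq_eq_sum_interp_coeff by (intro sum.cong) auto
  then show ?thesis
    using assms(3) by simp
qed

lemma abs_interp_coeff_le:
  assumes "0 < \<epsilon>" "\<epsilon> \<le> 1" "p \<le> L"
  shows "\<bar>interp_coeff lam L \<epsilon> n p\<bar> \<le> (\<Sum>i\<le>L. \<bar>lam i p\<bar>) * (inv_c n * \<epsilon> ^ n / \<epsilon> ^ L)"
proof -
  have vandermonde: "\<bar>\<Sum>i\<le>L. node L i ^ n * lam i p\<bar> \<le> (\<Sum>i\<le>L. \<bar>lam i p\<bar>)"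
    using node_nonneg node_le_1
    by (intro order_trans[OF sum_abs sum_mono])
       (simp add: abs_mult mult_left_le_one_le power_le_one)
  have "\<epsilon> ^ L \<le> \<epsilon> ^ p"
    using assms by (intro power_decreasing) auto
  also have "\<dots> \<le> \<epsilon> ^ p * inv_c p"
    using inv_c_ge_1[of p] assms by simp
  finally have scale: "inv_c n * \<epsilon> ^ n / (\<epsilon> ^ p * inv_c p) \<le> inv_c n * \<epsilon> ^ n / \<epsilon> ^ L"
    using assms inv_c_pos[of n] inv_c_pos[of p] by (intro divide_left_mono) auto
  have "\<bar>interp_coeff lam L \<epsilon> n p\<bar>
        = inv_c n * \<epsilon> ^ n / (\<epsilon> ^ p * inv_c p) * \<bar>\<Sum>i\<le>L. node L i ^ n * lam i p\<bar>"
    using assms inv_c_pos[of n] inv_c_pos[of p] by (simp add: interp_coeff_def abs_mult)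
  also have "\<dots> \<le> (inv_c n * \<epsilon> ^ n / \<epsilon> ^ L) * (\<Sum>i\<le>L. \<bar>lam i p\<bar>)"
    using assms inv_c_pos[of n] by (intro mult_mono[OF scale vandermonde]) auto
  finally show ?thesis
    by (simp add: mult_ac)
qed

definition interp_bound :: "(nat \<Rightarrow> nat \<Rightarrow> real) \<Rightarrow> nat \<Rightarrow> (nat \<Rightarrow> 'a::real_normed_vector) \<Rightarrow> real" where
  "interp_bound lam L v = (\<Sum>p\<le>L. \<Sum>i\<le>L. \<bar>lam i p\<bar> * norm (v p))"

lemma interp_bound_nonneg: "interp_bound lam L v \<ge> 0"
  unfolding interp_bound_def by (intro sum_nonneg) auto

lemma norm_interp_seq_le:
  fixes v :: "nat \<Rightarrow> 'a::real_normed_vector"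
  assumes "0 < \<epsilon>" "\<epsilon> \<le> 1"
  shows "norm (interp_seq lam L \<epsilon> v n) \<le> interp_bound lam L v * (inv_c n * \<epsilon> ^ n / \<epsilon> ^ L)"
proof -
  have "norm (interp_seq lam L \<epsilon> v n) \<le> (\<Sum>p\<le>L. \<bar>interp_coeff lam L \<epsilon> n p\<bar> * norm (v p))"
    unfolding interp_seq_eq_sum_interp_coeff by (rule order_trans[OF norm_sum]) simp
  also have "\<dots> \<le> (\<Sum>p\<le>L. ((\<Sum>i\<le>L. \<bar>lam i p\<bar>) * (inv_c n * \<epsilon> ^ n / \<epsilon> ^ L)) * norm (v p))"
    using abs_interp_coeff_le[OF assms] by (intro sum_mono mult_right_mono) auto
  also have "\<dots> = interp_bound lam L v * (inv_c n * \<epsilon> ^ n / \<epsilon> ^ L)"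
    by (simp add: interp_bound_def sum_distrib_right sum_distrib_left sum_divide_distrib mult_ac)
  finally show ?thesis .
qed

lemma norm_interp_seq_tail_le:
  fixes v :: "nat \<Rightarrow> 'a::real_normed_vector"
  assumes "0 < \<epsilon>" "\<epsilon> \<le> 1"
  shows "norm (interp_seq lam L \<epsilon> v (j + Suc L))
         \<le> interp_bound lam L v * (real L + 3) * (real j + 1) * \<epsilon> ^ Suc j"
proof -
  have "inv_c (j + Suc L) * \<epsilon> ^ (j + Suc L) / \<epsilon> ^ L = inv_c (j + Suc L) * \<epsilon> ^ Suc j"
    using assms by (simp add: power_add)
  also have "\<dots> \<le> ((real L + 3) * (real j + 1)) * \<epsilon> ^ Suc j"
    using inv_c_add_le[of j "Suc L"] assms by (intro mult_right_mono) (auto simp: add.commute)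
  finally have scale: "inv_c (j + Suc L) * \<epsilon> ^ (j + Suc L) / \<epsilon> ^ L
                       \<le> (real L + 3) * (real j + 1) * \<epsilon> ^ Suc j" .
  have "norm (interp_seq lam L \<epsilon> v (j + Suc L))
        \<le> interp_bound lam L v * (inv_c (j + Suc L) * \<epsilon> ^ (j + Suc L) / \<epsilon> ^ L)"
    by (rule norm_interp_seq_le[OF assms])
  also have "\<dots> \<le> interp_bound lam L v * ((real L + 3) * (real j + 1) * \<epsilon> ^ Suc j)"
    by (rule mult_left_mono[OF scale interp_bound_nonneg])
  finally show ?thesis
    by (simp only: mult.assoc)
qed

lemma interp_seq_eq_P_comb:
  "interp_seq lam L \<epsilon> v n
   = P_comb (\<lambda>i. qreal (\<epsilon> * node L i)) (interp_weight lam L \<epsilon> v) (Suc L) n"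
  unfolding interp_seq_def P_comb_def lessThan_Suc_atMost
  by (simp only: P_qreal qcnj_qreal qvscale_qreal)

section \<open>Positivity near the origin forces contractivity\<close>

lemma coeffs_geometric_bound:
  fixes s :: "nat \<Rightarrow> quat^'s^'r"
  assumes "summable (\<lambda>m. qsmat (P m (qreal R)) (s m))" "0 < R"
  obtains B where "B > 0" "\<And>m. norm (s m) \<le> B * (1/R)^m"
proof -
  have "(\<lambda>m. qsmat (P m (qreal R)) (s m)) \<longlonglongrightarrow> 0"
    by (rule summable_LIMSEQ_zero[OF assms(1)])
  then have "Bseq (\<lambda>m. qsmat (P m (qreal R)) (s m))"
    by (intro convergent_imp_Bseq convergentI)
  then obtain B where B: "B > 0" "\<And>m. norm (qsmat (P m (qreal R)) (s m)) \<le> B"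
    by (auto simp: Bseq_def)
  have "norm (s m) \<le> B * (1/R)^m" for m
  proof -
    have "R^m * norm (s m) \<le> inv_c m * R^m * norm (s m)"
      using inv_c_ge_1[of m] assms(2) by (simp add: mult_right_mono)
    also have "\<dots> = norm (qsmat (P m (qreal R)) (s m))"
      using assms(2) inv_c_pos[of m] by (simp add: P_qreal norm_qsmat abs_mult)
    finally have "R^m * norm (s m) \<le> B"
      using B(2)[of m] by linarith
    then show ?thesis
      using assms(2) by (simp add: field_simps power_divide)
  qed
  with B(1) show ?thesis by (rule that)
qed

lemma norm_interp_point_le: "0 \<le> \<epsilon> \<Longrightarrow> i \<le> L \<Longrightarrow> norm (qreal (\<epsilon> * node L i)) \<le> \<epsilon>"
  using node_nonneg[of L i] node_le_1[of i L] by (simp add: abs_mult mult_left_le)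

lemma interp_seq_tail_sq_le:
  fixes v :: "nat \<Rightarrow> 'a::real_normed_vector"
  assumes \<epsilon>: "0 < \<epsilon>" "\<epsilon> \<le> 1/4"
    and sw: "summable (\<lambda>n. (norm (interp_seq lam L \<epsilon> v n))^2)"
  shows "(\<Sum>n. (norm (interp_seq lam L \<epsilon> v (n + Suc L)))^2)
         \<le> \<epsilon> * ((interp_bound lam L v * (real L + 3))^2 * (\<Sum>n. (real n + 1)^2 * (1/4)^n))"
proof -
  define C where "C = (interp_bound lam L v * (real L + 3))^2"
  have geom: "summable (\<lambda>n. (real n + 1)^2 * (1/4::real)^n)"
    by (rule summable_poly_times_geometric) auto
  have term_le: "(norm (interp_seq lam L \<epsilon> v (n + Suc L)))^2 \<le> \<epsilon> * C * ((real n + 1)^2 * (1/4)^n)" for n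
  proof -
    have "(norm (interp_seq lam L \<epsilon> v (n + Suc L)))^2
          \<le> (interp_bound lam L v * (real L + 3) * (real n + 1) * \<epsilon> ^ Suc n)^2"
      using norm_interp_seq_tail_le[of \<epsilon> lam L v n] \<epsilon> by (intro power_mono) auto
    also have "\<dots> = C * (real n + 1)^2 * (\<epsilon> * (\<epsilon> * (\<epsilon>^2)^n))"
      unfolding C_def by (simp add: power_mult_distrib power_mult[symmetric] mult_ac power2_eq_square)
    also have "\<dots> \<le> C * (real n + 1)^2 * (\<epsilon> * (1/4)^n)"
    proof -
      have "\<epsilon> * \<epsilon> \<le> 1/4"
        using \<epsilon> mult_mono[of \<epsilon> 1 \<epsilon> "1/4"] by simp
      then have "(\<epsilon>^2)^n \<le> (1/4)^n"
        using \<epsilon> by (intro power_mono) (auto simp: power2_eq_square)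
      then have "\<epsilon> * (\<epsilon>^2)^n \<le> 1 * (1/4)^n"
        using \<epsilon> by (intro mult_mono) auto
      then show ?thesis
        using \<epsilon> by (intro mult_left_mono) (auto simp: C_def)
    qed
    finally show ?thesis by (simp add: mult_ac)
  qed
  have "(\<Sum>n. (norm (interp_seq lam L \<epsilon> v (n + Suc L)))^2) \<le> (\<Sum>n. \<epsilon> * C * ((real n + 1)^2 * (1/4)^n))"
    by (rule suminf_le[OF term_le summable_ignore_initial_segment[OF sw] summable_mult[OF geom]])
  also have "\<dots> = \<epsilon> * (C * (\<Sum>n. (real n + 1)^2 * (1/4)^n))"
    using suminf_mult[OF geom, of "\<epsilon> * C"] by (simp add: mult_ac)
  finally show ?thesis
    unfolding C_def .
qed

lemma pos_def_kernel_imp_toeplitz_adj_sq_le: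
  fixes s :: "nat \<Rightarrow> quat^'s^'r" and u :: "nat \<Rightarrow> quat^'r"
  assumes kc: "kernel_converges s N" and pd: "pos_def_kernel (KS s) N"
    and y: "\<And>j. j < k \<Longrightarrow> y j \<in> N"
    and sw: "summable (\<lambda>n. (norm (P_comb y u k n))^2)"
  shows "\<And>n. summable (\<lambda>m. qadj (s m) (P_comb y u k (n + m)))"
    and "summable (\<lambda>n. (norm (toeplitz_adj s (P_comb y u k) n))^2)"
    and "(\<Sum>n. (norm (toeplitz_adj s (P_comb y u k) n))^2) \<le> (\<Sum>n. (norm (P_comb y u k n))^2)"
proof -
  have ck: "summable (ck_term s n (y i))" if "i < k" for i n
    using kc y[OF that] by (simp add: kernel_converges_def)
  have K: "summable (\<lambda>n. K_term s n (y i) (y j))" if "i < k" "j < k" for i j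
    using kc y[OF that(1)] y[OF that(2)] by (simp add: kernel_converges_def)
  show "summable (\<lambda>m. qadj (s m) (P_comb y u k (n + m)))" for n
    by (rule sum_qadj_ck_eq_toeplitz_adj(1)[OF ck])
  have "qnonneg (\<Sum>i<k. \<Sum>j<k. qhform (u i) (KS s (y i) (y j)) (u j))"
    using pd y unfolding pos_def_kernel_def by blast
  then show "summable (\<lambda>n. (norm (toeplitz_adj s (P_comb y u k) n))^2)"
    and "(\<Sum>n. (norm (toeplitz_adj s (P_comb y u k) n))^2) \<le> (\<Sum>n. (norm (P_comb y u k n))^2)"
    using qnonneg_KS_hform_iff[where u=u, OF ck K sw] by simp_all
qed

lemma toeplitz_adj_interp_seq_sq_le:
  fixes s :: "nat \<Rightarrow> quat^'s^'r" and v :: "nat \<Rightarrow> quat^'r"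
  assumes kc: "kernel_converges s N" and pd: "pos_def_kernel (KS s) N"
    and ball: "ball 0 \<delta> \<subseteq> N" and lam: "vandermonde_inverse L lam"
    and \<epsilon>: "0 < \<epsilon>" "\<epsilon> \<le> 1/4" "\<epsilon> < \<delta>"
  shows "\<And>n. summable (\<lambda>m. qadj (s m) (interp_seq lam L \<epsilon> v (n + m)))"
    and "(\<Sum>n\<le>L. (norm (toeplitz_adj s (interp_seq lam L \<epsilon> v) n))^2)
         \<le> (\<Sum>n\<le>L. (norm (v n))^2)
           + \<epsilon> * ((interp_bound lam L v * (real L + 3))^2 * (\<Sum>n. (real n + 1)^2 * (1/4)^n))"
proof -
  define y where "y i = qreal (\<epsilon> * node L i)" for i
  define W where "W = interp_seq lam L \<epsilon> v"
  have W_eq: "W = P_comb y (interp_weight lam L \<epsilon> v) (Suc L)"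
    unfolding W_def y_def by (rule ext) (rule interp_seq_eq_P_comb)
  have y_le: "norm (y i) \<le> \<epsilon>" if "i < Suc L" for i
    unfolding y_def using \<epsilon> that by (intro norm_interp_point_le) auto
  then have yN: "y i \<in> N" if "i < Suc L" for i
    using ball \<epsilon> that by (force simp: dist_norm)
  have sw: "summable (\<lambda>n. (norm (W n))^2)"
    unfolding W_eq using y_le \<epsilon> by (intro summable_sq_norm_P_comb) force
  note toeplitz = pos_def_kernel_imp_toeplitz_adj_sq_le[OF kc pd yN sw[unfolded W_eq], folded W_eq]
  show "summable (\<lambda>m. qadj (s m) (interp_seq lam L \<epsilon> v (n + m)))" for n
    using toeplitz(1) unfolding W_def .
  have "(\<Sum>n\<le>L. (norm (toeplitz_adj s W n))^2) \<le> (\<Sum>n. (norm (toeplitz_adj s W n))^2)"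
    by (rule sum_le_suminf[OF toeplitz(2)]) auto
  also note toeplitz(3)
  also have "(\<Sum>n. (norm (W n))^2) = (\<Sum>n. (norm (W (n + Suc L)))^2) + (\<Sum>n<Suc L. (norm (W n))^2)"
    by (rule suminf_split_initial_segment[OF sw])
  also have "(\<Sum>n<Suc L. (norm (W n))^2) = (\<Sum>n\<le>L. (norm (v n))^2)"
    unfolding lessThan_Suc_atMost W_def using interp_seq_eq[OF lam \<epsilon>(1), where v=v] by simp
  also have "(\<Sum>n. (norm (W (n + Suc L)))^2)
             \<le> \<epsilon> * ((interp_bound lam L v * (real L + 3))^2 * (\<Sum>n. (real n + 1)^2 * (1/4)^n))"
    unfolding W_def by (rule interp_seq_tail_sq_le[OF \<epsilon>(1,2) sw[unfolded W_def]])
  finally show "(\<Sum>n\<le>L. (norm (toeplitz_adj s (interp_seq lam L \<epsilon> v) n))^2)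
         \<le> (\<Sum>n\<le>L. (norm (v n))^2)
           + \<epsilon> * ((interp_bound lam L v * (real L + 3))^2 * (\<Sum>n. (real n + 1)^2 * (1/4)^n))"
    by (simp add: W_def add.commute)
qed

lemma norm_qadj_interp_seq_tail_le:
  fixes s :: "nat \<Rightarrow> quat^'s^'r" and v :: "nat \<Rightarrow> quat^'r" and lam :: "nat \<Rightarrow> nat \<Rightarrow> real"
  assumes coeffs: "\<And>m. norm (s m) \<le> B * (1/R)^m" and B: "B > 0" and R: "0 < R" "R \<le> 1"
    and \<epsilon>: "0 < \<epsilon>" "\<epsilon> \<le> R/2" and m: "m \<le> j + Suc L"
  defines "K \<equiv> real (CARD('s) * CARD('r)) * B * interp_bound lam L v * (real L + 3)"
  shows "norm (qadj (s m) (interp_seq lam L \<epsilon> v (j + Suc L)))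
         \<le> \<epsilon> * (K * (1/R)^(L + 1) * ((real j + 1) * (1/2)^j))"
proof -
  have K: "K \<ge> 0"
    unfolding K_def using B interp_bound_nonneg[of lam L v] by simp
  have s_le: "norm (s m) \<le> B * (1/R)^(j + Suc L)"
  proof -
    have "(1/R)^m \<le> (1/R)^(j + Suc L)"
      using R m by (intro power_increasing) auto
    then show ?thesis
      using coeffs[of m] B by (meson mult_left_mono less_le order_trans)
  qed
  have ratio: "(\<epsilon>/R)^(Suc j) \<le> (\<epsilon>/R) * (1/2)^j"
  proof -
    have "(\<epsilon>/R)^j \<le> (1/2)^j"
      using \<epsilon> R by (intro power_mono) (auto simp: field_simps)
    then have "(\<epsilon>/R) * (\<epsilon>/R)^j \<le> (\<epsilon>/R) * (1/2)^j"
      using \<epsilon> R by (intro mult_left_mono) auto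
    then show ?thesis
      by (simp only: power_Suc)
  qed
  have "norm (qadj (s m) (interp_seq lam L \<epsilon> v (j + Suc L)))
        \<le> real (CARD('s) * CARD('r)) * norm (s m) * norm (interp_seq lam L \<epsilon> v (j + Suc L))"
    by (rule norm_qadj_le)
  also have "\<dots> \<le> real (CARD('s) * CARD('r)) * (B * (1/R)^(j + Suc L))
                   * (interp_bound lam L v * (real L + 3) * (real j + 1) * \<epsilon> ^ Suc j)"
    using s_le norm_interp_seq_tail_le[of \<epsilon> lam L v j] \<epsilon> R B
    by (intro mult_mono mult_left_mono) auto
  also have "\<dots> = K * (real j + 1) * (1/R)^L * (\<epsilon>/R)^(Suc j)"
    unfolding K_def by (simp add: power_add power_divide field_simps)
  also have "\<dots> \<le> K * (real j + 1) * (1/R)^L * ((\<epsilon>/R) * (1/2)^j)"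
    using K R by (intro mult_left_mono[OF ratio]) auto
  also have "\<dots> = \<epsilon> * (K * (1/R)^(L + 1) * ((real j + 1) * (1/2)^j))"
    by (simp add: field_simps)
  finally show ?thesis .
qed

lemma toeplitz_adj_interp_seq_approx:
  fixes s :: "nat \<Rightarrow> quat^'s^'r" and v :: "nat \<Rightarrow> quat^'r"
  assumes coeffs: "\<And>m. norm (s m) \<le> B * (1/R)^m" and B: "B > 0" and R: "0 < R" "R \<le> 1"
    and lam: "vandermonde_inverse L lam" and \<epsilon>: "0 < \<epsilon>" "\<epsilon> \<le> R/2"
    and sz: "summable (\<lambda>m. qadj (s m) (interp_seq lam L \<epsilon> v (n + m)))" and n: "n \<le> L"
  defines "K \<equiv> real (CARD('s) * CARD('r)) * B * interp_bound lam L v * (real L + 3)"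
  shows "norm (toeplitz_adj s (interp_seq lam L \<epsilon> v) n - (\<Sum>m\<le>L - n. qadj (s m) (v (n + m))))
         \<le> \<epsilon> * (K * (1/R)^(L + 1) * (\<Sum>j. (real j + 1) * (1/2)^j))"
proof -
  define k where "k = Suc (L - n)"
  define g where "g m = qadj (s m) (interp_seq lam L \<epsilon> v (n + m))" for m
  have "toeplitz_adj s (interp_seq lam L \<epsilon> v) n = (\<Sum>j. g (j + k)) + (\<Sum>m<k. g m)"
    unfolding toeplitz_adj_def g_def by (rule suminf_split_initial_segment[OF sz])
  moreover have "(\<Sum>m<k. g m) = (\<Sum>m\<le>L - n. qadj (s m) (v (n + m)))"
    unfolding k_def lessThan_Suc_atMost g_def
    using n interp_seq_eq[OF lam \<epsilon>(1), where v=v] by (intro sum.cong) auto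
  ultimately have diff: "toeplitz_adj s (interp_seq lam L \<epsilon> v) n - (\<Sum>m\<le>L - n. qadj (s m) (v (n + m)))
                         = (\<Sum>j. g (j + k))"
    by simp
  have geom: "summable (\<lambda>j. (real j + 1) * (1/2::real)^j)"
    using summable_poly_times_geometric[of "1/2" 1] by simp
  have "norm (g (j + k)) \<le> \<epsilon> * (K * (1/R)^(L + 1) * ((real j + 1) * (1/2)^j))" for j
  proof -
    have "n + (j + k) = j + Suc L"
      unfolding k_def using n by simp
    then show ?thesis
      unfolding g_def K_def using n
      by (simp only:) (rule norm_qadj_interp_seq_tail_le[OF coeffs B R \<epsilon>], simp add: k_def)
  qed
  then have "norm (\<Sum>j. g (j + k)) \<le> (\<Sum>j. \<epsilon> * (K * (1/R)^(L + 1) * ((real j + 1) * (1/2)^j)))"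
    by (rule norm_suminf_le) (intro summable_mult geom)
  also have "\<dots> = \<epsilon> * (K * (1/R)^(L + 1) * (\<Sum>j. (real j + 1) * (1/2)^j))"
    using suminf_mult[OF geom, of "\<epsilon> * (K * (1/R)^(L + 1))"] by (simp add: mult_ac)
  finally show ?thesis
    unfolding diff .
qed

lemma sum_sq_norm_le_if_approximable:
  fixes Z :: "real \<Rightarrow> nat \<Rightarrow> 'a::real_normed_vector"
  assumes "0 < \<epsilon>\<^sub>0"
    and bound: "\<And>\<epsilon>. 0 < \<epsilon> \<Longrightarrow> \<epsilon> \<le> \<epsilon>\<^sub>0 \<Longrightarrow> (\<Sum>n\<in>A. (norm (Z \<epsilon> n))^2) \<le> V + \<epsilon> * C\<^sub>1"
    and approx: "\<And>\<epsilon> n. 0 < \<epsilon> \<Longrightarrow> \<epsilon> \<le> \<epsilon>\<^sub>0 \<Longrightarrow> n \<in> A \<Longrightarrow> norm (Z \<epsilon> n - Z\<^sub>0 n) \<le> \<epsilon> * C\<^sub>2"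
  shows "(\<Sum>n\<in>A. (norm (Z\<^sub>0 n))^2) \<le> V"
proof -
  have small: "\<forall>\<^sub>F \<epsilon> in at_right 0. 0 < \<epsilon> \<and> \<epsilon> \<le> \<epsilon>\<^sub>0"
    using assms(1) by (subst eventually_at_right) (auto intro!: exI[of _ \<epsilon>\<^sub>0])
  have Z_lim: "((\<lambda>\<epsilon>. Z \<epsilon> n) \<longlongrightarrow> Z\<^sub>0 n) (at_right 0)" if "n \<in> A" for n
  proof -
    have "((\<lambda>\<epsilon>::real. \<epsilon> * C\<^sub>2) \<longlongrightarrow> 0) (at_right 0)"
      by (intro tendsto_mult_left_zero tendsto_ident_at)
    then have "((\<lambda>\<epsilon>. Z \<epsilon> n - Z\<^sub>0 n) \<longlongrightarrow> 0) (at_right 0)"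
    proof (rule Lim_null_comparison[rotated])
      show "\<forall>\<^sub>F \<epsilon> in at_right 0. norm (Z \<epsilon> n - Z\<^sub>0 n) \<le> \<epsilon> * C\<^sub>2"
        using small by (rule eventually_mono) (use approx that in blast)
    qed
    then show ?thesis
      by (simp add: LIM_zero_iff)
  qed
  have "((\<lambda>\<epsilon>. \<Sum>n\<in>A. (norm (Z \<epsilon> n))^2) \<longlongrightarrow> (\<Sum>n\<in>A. (norm (Z\<^sub>0 n))^2)) (at_right 0)"
    by (intro tendsto_sum tendsto_power tendsto_norm Z_lim)
  moreover have "((\<lambda>\<epsilon>::real. V + \<epsilon> * C\<^sub>1) \<longlongrightarrow> V) (at_right 0)"
    using tendsto_add[OF tendsto_const tendsto_mult_left_zero[OF tendsto_ident_at]] by simp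
  moreover have "\<forall>\<^sub>F \<epsilon> in at_right 0. (\<Sum>n\<in>A. (norm (Z \<epsilon> n))^2) \<le> V + \<epsilon> * C\<^sub>1"
    using small by (rule eventually_mono) (use bound in blast)
  ultimately show ?thesis
    by (intro tendsto_le[OF trivial_limit_at_right_real]) auto
qed

lemma pos_def_KS_imp_toeplitz_contractive:
  fixes s :: "nat \<Rightarrow> quat^'s^'r" and N :: "quat set"
  assumes N: "open N" "0 \<in> N" and summable: "\<forall>x\<in>N. summable (\<lambda>n. qsmat (P n x) (s n))"
    and kc: "kernel_converges s N" and pd: "pos_def_kernel (KS s) N"
  shows "toeplitz_contractive s"
  unfolding toeplitz_contractive_def
proof (intro allI)
  fix L and v :: "nat \<Rightarrow> quat^'r"
  obtain \<delta> where \<delta>: "\<delta> > 0" "ball 0 \<delta> \<subseteq> N"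
    using N open_contains_ball by blast
  define R where "R = min (\<delta>/2) (1/2)"
  have R: "0 < R" "R \<le> 1/2" "R < \<delta>"
    using \<delta> by (auto simp: R_def)
  then have "qreal R \<in> ball 0 \<delta>"
    by simp
  then have "summable (\<lambda>n. qsmat (P n (qreal R)) (s n))"
    using \<delta>(2) summable by blast
  then obtain B where B: "B > 0" "\<And>m. norm (s m) \<le> B * (1/R)^m"
    using coeffs_geometric_bound R(1) by blast
  obtain lam where lam: "vandermonde_inverse L lam"
    using vandermonde_inverse_exists by blast
  show "(\<Sum>n\<le>L. (norm (\<Sum>m\<le>L - n. qadj (s m) (v (n + m))))^2) \<le> (\<Sum>n\<le>L. (norm (v n))^2)"
  proof (rule sum_sq_norm_le_if_approximable[where Z="\<lambda>\<epsilon>. toeplitz_adj s (interp_seq lam L \<epsilon> v)"])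
    show "0 < R/2"
      using R by simp
    fix \<epsilon> assume \<epsilon>: "0 < \<epsilon>" "\<epsilon> \<le> R/2"
    then have \<epsilon>': "\<epsilon> \<le> 1/4" "\<epsilon> < \<delta>"
      using R by auto
    show "(\<Sum>n\<le>L. (norm (toeplitz_adj s (interp_seq lam L \<epsilon> v) n))^2)
          \<le> (\<Sum>n\<le>L. (norm (v n))^2)
            + \<epsilon> * ((interp_bound lam L v * (real L + 3))^2 * (\<Sum>n. (real n + 1)^2 * (1/4)^n))"
      by (rule toeplitz_adj_interp_seq_sq_le(2)[OF kc pd \<delta>(2) lam \<epsilon>(1) \<epsilon>'])
    fix n assume "n \<in> {..L}"
    then show "norm (toeplitz_adj s (interp_seq lam L \<epsilon> v) n - (\<Sum>m\<le>L - n. qadj (s m) (v (n + m))))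
               \<le> \<epsilon> * (real (CARD('s) * CARD('r)) * B * interp_bound lam L v * (real L + 3)
                       * (1/R)^(L + 1) * (\<Sum>j. (real j + 1) * (1/2)^j))"
      using toeplitz_adj_interp_seq_approx[OF B(2,1) R(1) _ lam \<epsilon>
          toeplitz_adj_interp_seq_sq_le(1)[OF kc pd \<delta>(2) lam \<epsilon>(1) \<epsilon>']] R
      by simp
  qed
qed

section \<open>Uniqueness\<close>

lemma powser_eq_0_imp_coeff_eq_0:
  fixes a :: "nat \<Rightarrow> real"
  assumes r: "0 < r" and sums: "\<And>x. \<bar>x\<bar> < r \<Longrightarrow> (\<lambda>n. a n * x^n) sums 0"
  shows "a m = 0"
proof (rule ccontr)
  assume am: "a m \<noteq> 0"
  show False
  proof (cases "m = 0")
    case True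
    have "(\<lambda>n. a n * 0^n) sums a 0"
      by (rule powser_sums_zero)
    with sums[of 0] r have "a 0 = 0"
      using sums_unique2 by force
    with am True show False by simp
  next
    case False
    show False
    proof (rule powser_0_nonzero[where a=a and \<xi>=0 and f="\<lambda>_. 0::real" and m=m, OF r])
      show "(\<lambda>n. a n * (x - 0) ^ n) sums 0" if "norm (x - 0) < r" for x
        using sums that by simp
      fix t :: real
      assume "0 < t" and nonzero: "\<And>z::real. z \<in> cball 0 t - {0} \<Longrightarrow> (\<lambda>_. 0::real) z \<noteq> 0"
      then show False
        using nonzero[of t] by simp
    qed (use am False in auto)
  qed
qed

lemma powser_euclidean_eq_0_imp_coeff_eq_0:
  fixes a :: "nat \<Rightarrow> 'a::euclidean_space"
  assumes r: "0 < r" and sums: "\<And>x. \<bar>x\<bar> < r \<Longrightarrow> (\<lambda>n. (x^n) *\<^sub>R a n) sums 0"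
  shows "a m = 0"
proof (rule euclidean_eqI)
  fix b :: 'a
  have "(\<lambda>n. (a n \<bullet> b) * x^n) sums 0" if "\<bar>x\<bar> < r" for x
    using bounded_linear.sums[OF bounded_linear_inner_left sums[OF that]] by (simp add: mult.commute)
  then show "a m \<bullet> b = 0 \<bullet> b"
    using powser_eq_0_imp_coeff_eq_0[OF r, of "\<lambda>n. a n \<bullet> b"] by simp
qed

lemma coeffs_eq_if_series_fun_eq_near_0:
  fixes s t :: "nat \<Rightarrow> quat^'s^'r"
  assumes U: "open U" "0 \<in> U"
    and summable: "\<forall>x\<in>U. summable (\<lambda>n. qsmat (P n x) (s n)) \<and> summable (\<lambda>n. qsmat (P n x) (t n))"
    and eq: "\<forall>x\<in>U. series_fun t x = series_fun s x"
  shows "t = s"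
proof -
  obtain r where r: "r > 0" "ball 0 r \<subseteq> U"
    using U open_contains_ball by blast
  have "(\<lambda>n. (x^n) *\<^sub>R (inv_c n *\<^sub>R (t n - s n))) sums 0" if "\<bar>x\<bar> < r" for x
  proof -
    have "qreal x \<in> U"
      using r that by auto
    then have "(\<lambda>n. qsmat (P n (qreal x)) (t n) - qsmat (P n (qreal x)) (s n))
                 sums (series_fun t (qreal x) - series_fun s (qreal x))"
      unfolding series_fun_def using summable by (intro sums_diff summable_sums) auto
    then show ?thesis
      using eq \<open>qreal x \<in> U\<close> by (simp add: P_qreal qsmat_qreal scaleR_diff_right mult.commute)
  qed
  then have scaled_diff: "inv_c n *\<^sub>R (t n - s n) = 0" for n
    by (rule powser_euclidean_eq_0_imp_coeff_eq_0[OF r(1)])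
  show ?thesis
  proof
    fix n
    show "t n = s n"
      using scaled_diff[of n] inv_c_pos[of n] by simp
  qed
qed

theorem mainTheorem12:
  fixes s :: "nat \<Rightarrow> quat^'s^'r" and N :: "quat set"
  assumes "open N" and "0 \<in> N"
    and "\<forall>x\<in>N. summable (\<lambda>n. qsmat (P n x) (s n))"
    and "kernel_converges s N"
    and "pos_def_kernel (KS s) N"
  shows "(\<forall>x\<in>ellipsoid. summable (\<lambda>n. qsmat (P n x) (s n)))
       \<and> schur_multiplier s ellipsoid
       \<and> (\<forall>t :: nat \<Rightarrow> quat^'s^'r. schur_multiplier t ellipsoid
              \<and> (\<forall>x\<in>N \<inter> ellipsoid. series_fun t x = series_fun s x)
            \<longrightarrow> (\<forall>x\<in>ellipsoid. series_fun t x = series_fun s x))"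
proof -
  have contractive: "toeplitz_contractive s"
    by (rule pos_def_KS_imp_toeplitz_contractive[OF assms])
  have "schur_multiplier s (ball 0 1)"
    by (rule schur_multiplier_ball[OF contractive toeplitz_contractive_norm_le[OF contractive]])
  then have schur: "schur_multiplier s ellipsoid"
    by (rule schur_multiplier_subset[OF _ ellipsoid_subset_ball])
  have "t = s" if "schur_multiplier t ellipsoid" "\<forall>x\<in>N \<inter> ellipsoid. series_fun t x = series_fun s x"
    for t :: "nat \<Rightarrow> quat^'s^'r"
  proof (rule coeffs_eq_if_series_fun_eq_near_0)
    show "open (N \<inter> ball 0 (1/3))" "0 \<in> N \<inter> ball 0 (1/3)"
      using assms(1,2) by auto
    show "\<forall>x\<in>N \<inter> ball 0 (1/3). summable (\<lambda>n. qsmat (P n x) (s n)) \<and> summable (\<lambda>n. qsmat (P n x) (t n))"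
      and "\<forall>x\<in>N \<inter> ball 0 (1/3). series_fun t x = series_fun s x"
      using ball_subset_ellipsoid schur that by (auto simp: schur_multiplier_def)
  qed
  with schur show ?thesis
    by (auto simp: schur_multiplier_def)
qed

end
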